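(* Let $p\in[1,\infty)$ and $G_0\in\mathcal{P}_p(\Theta)$. Then for every neighborhood $V$ of $G_0$ in the topology of $\mathcal{P}_p(\Theta)$ induced by the Wasserstein distance $W_p$, there exist $G\in V$ and $n\in\mathbb{N}$ such that the level $n$ SBA approximation $G^{(n)}$ of $G$ belongs to $V$. Moreover, if $G_0\in\mathcal{P}_*(\Theta)$, one may take $G=G_0$, and in this case $W_p(G_0^{(n)},G_0)\to0$ as $n\to\infty$.
   Context: $\Theta\subseteq\mathbb{R}$ is either $\mathbb{R}$, a closed half-line, or a compact interval with nonempty interior. $\mathcal{P}_p(\Theta)$ is the set of Borel probability measures on $\Theta$ with finite $p$-th moment, with the Wasserstein distance $W_p(G_1,G_2)=\inf_\gamma(\iint|\theta'-\theta|^p\,d\gamma)^{1/p}$ over couplings $\gamma$ of $G_1,G_2$. $\mathcal{P}_*(\Theta)$ is the set of probability measures whose support is a non-degenerate compact interval. A measure $G$ is identified with its distribution function. For $a_1\le a_2$, $b_G(a_1,a_2]=\int_{(a_1,a_2]}\theta\,dG/(G(a_2)-G(a_1))$ if $G(a_2)>G(a_1)$ and $=a_1$ otherwise. The SBA of $G$ with finite mean: $\mu_{1,1}=\int\theta\,dG$; for $j\ge2$, $\mu_{j,2l}=\mu_{j-1,l}$ ($1\le l\le 2^{j-1}-1$), $\mu_{j,2l-1}=b_G(\mu_{j-1,l-1},\mu_{j-1,l}]$ ($1\le l\le 2^{j-1}$), with $\mu_{j,0}=\inf\Theta$, $\mu_{j,2^j}=\sup\Theta$. Level $n$ intervals: $\Theta_{n,1}=[\mu_{n,0},\mu_{n,1}]$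 if $\mu_{n,0}>-\infty$, else $(\mu_{n,0},\mu_{n,1}]$; $\Theta_{n,l}=(\mu_{n,l-1},\mu_{n,l}]$ for $2\le l\le 2^n-1$; $\Theta_{n,2^n}=(\mu_{n,2^n-1},\mu_{n,2^n}]$ if $\mu_{n,2^n}<\infty$, else $(\mu_{n,2^n-1},\infty)$. The level $n$ SBA approximation is $G^{(n)}=\sum_{l=1}^{2^n}G(\Theta_{n,l})\delta_{\mu_{n+1,2l-1}}$. *)

theory Defs
  imports "HOL-Probability.Probability"
begin

definition admissible_Theta :: "real set \<Rightarrow> bool" where
  "admissible_Theta T \<longleftrightarrow> T = UNIV \<or> (\<exists>a. T = {a..} \<or> T = {..a}) \<or> (\<exists>a b. a < b \<and> T = {a..b})"

definition Pp :: "real \<Rightarrow> real set \<Rightarrow> real measure set" where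
  "Pp p T = {G. sets G = sets borel \<and> prob_space G \<and> emeasure G (- T) = 0
                 \<and> integrable G (\<lambda>x. \<bar>x\<bar> powr p)}"

definition couplings :: "real measure \<Rightarrow> real measure \<Rightarrow> (real \<times> real) measure set" where
  "couplings G1 G2 = {\<gamma>. sets \<gamma> = sets borel \<and> prob_space \<gamma>
                         \<and> distr \<gamma> borel fst = G1 \<and> distr \<gamma> borel snd = G2}"

definition wasserstein :: "real \<Rightarrow> real measure \<Rightarrow> real measure \<Rightarrow> real" where
  "wasserstein p G1 G2 =
     (enn2real (INF \<gamma>\<in>couplings G1 G2. \<integral>\<^sup>+ z. ennreal (\<bar>snd z - fst z\<bar> powr p) \<partial>\<gamma>)) powr (1 / p)"

definition W_nhd :: "real \<Rightarrow> real set \<Rightarrow> real measure \<Rightarrow> real measure set \<Rightarrow> bool" where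
  "W_nhd p T G0 V \<longleftrightarrow> V \<subseteq> Pp p T \<and>
     (\<exists>e>0. {G \<in> Pp p T. wasserstein p G0 G < e} \<subseteq> V)"

definition support :: "real measure \<Rightarrow> real set" where
  "support G = {x. \<forall>e>0. emeasure G (ball x e) > 0}"

definition Pstar :: "real set \<Rightarrow> real measure set" where
  "Pstar T = {G. sets G = sets borel \<and> prob_space G \<and> emeasure G (- T) = 0
                 \<and> (\<exists>a b. a < b \<and> support G = {a..b})}"

definition distF :: "real measure \<Rightarrow> ereal \<Rightarrow> real" where
  "distF G a = measure G {x. ereal x \<le> a}"

definition bG :: "real measure \<Rightarrow> ereal \<Rightarrow> ereal \<Rightarrow> ereal" where
  "bG G a1 a2 =
     (if distF G a2 > distF G a1
      then ereal ((\<integral>x. indicator {x. a1 < ereal x \<and> ereal x \<le> a2} x * x \<partial>G)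
                  / (distF G a2 - distF G a1))
      else a1)"

text \<open>SBA points mu_{j,l} (j \<ge> 1); level 0 is the pair (inf Theta, sup Theta),
which is only used as an auxiliary starting point.\<close>
fun sba :: "real measure \<Rightarrow> real set \<Rightarrow> nat \<Rightarrow> nat \<Rightarrow> ereal" where
  "sba G T 0 l = (if l = 0 then Inf (ereal ` T) else Sup (ereal ` T))"
| "sba G T (Suc 0) l =
     (if l = 0 then Inf (ereal ` T) else if l = 1 then ereal (\<integral>x. x \<partial>G) else Sup (ereal ` T))"
| "sba G T (Suc (Suc j)) l =
     (if l = 0 then Inf (ereal ` T)
      else if l = 2 ^ Suc (Suc j) then Sup (ereal ` T)
      else if even l then sba G T (Suc j) (l div 2)
      else bG G (sba G T (Suc j) ((l - 1) div 2)) (sba G T (Suc j) ((l + 1) div 2)))"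

definition sba_int :: "real measure \<Rightarrow> real set \<Rightarrow> nat \<Rightarrow> nat \<Rightarrow> real set" where
  "sba_int G T n l =
     (if l = 1 \<and> sba G T n 0 > -\<infinity>
      then {x. sba G T n 0 \<le> ereal x \<and> ereal x \<le> sba G T n 1}
      else {x. sba G T n (l - 1) < ereal x \<and> ereal x \<le> sba G T n l})"

definition sba_approx :: "real measure \<Rightarrow> real set \<Rightarrow> nat \<Rightarrow> real measure" where
  "sba_approx G T n = measure_of UNIV (sets borel)
     (\<lambda>A. \<Sum>l\<in>{1..2^n}. ennreal (measure G (sba_int G T n l))
            * indicator A (real_of_ereal (sba G T (Suc n) (2 * l - 1))))"

end

theory Submission
  imports Defs
begin

text \<open>
  The level \<open>n\<close> SBA approximation is the image of \<open>G\<close> under the quantizer sending each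
  level \<open>n\<close> cell \<open>\<Theta>_{n,l}\<close> to \<open>\<mu>_{n+1,2l-1}\<close>, the conditional mean of \<open>G\<close> on that cell;
  passing to level \<open>n + 1\<close> cuts every cell at this point. If the support of \<open>G\<close> is a compact
  interval \<open>[c, d]\<close>, every subinterval of \<open>[c, d]\<close> carries mass, so the cut points cannot
  stay away from the middle of a cell and the cells containing a point \<open>x\<close> shrink to \<open>x\<close>.
  Hence the quantizers converge to the identity \<open>G\<close>-a.e., and dominated convergence gives
  convergence in \<open>W\<^sub>p\<close>.

  A general \<open>G \<in> P\<^sub>p(\<Theta>)\<close> is first approximated in \<open>W\<^sub>p\<close>, by rounding to a grid, by a
  finitely supported \<open>G'\<close> with atoms in \<open>\<Theta>\<close> strictly above \<open>inf \<Theta>\<close>. The conditional mean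
  of a cell holding at least two atoms is at least its smallest and below its largest atom, so
  each cut splits off one of them; after finitely many levels every cell holds a single atom, and then
  the SBA approximation of \<open>G'\<close> is \<open>G'\<close> itself.
\<close>

lemma Sup_ereal_image_eq_PInf:
  assumes "\<And>r. \<exists>x\<in>S. r < x"
  shows "Sup (ereal ` S) = \<infinity>"
proof -
  have "\<exists>i\<in>ereal ` S. y < i" if "y < \<infinity>" for y
  proof (cases y)
    case (real r)
    with assms obtain x where "x \<in> S" "r < x" by blast
    with real show ?thesis by auto
  next
    case MInf
    with assms obtain x where "x \<in> S" by blast
    with MInf show ?thesis by auto
  qed (use that in simp)
  then show ?thesis by (metis Sup_eq_top_iff top_ereal_def)
qed

lemma Inf_ereal_image_eq_MInf:
  assumes "\<And>r. \<exists>x\<in>S. x < r"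
  shows "Inf (ereal ` S) = -\<infinity>"
proof -
  have "\<exists>i\<in>ereal ` S. i < y" if "-\<infinity> < y" for y
  proof (cases y)
    case (real r)
    with assms obtain x where "x \<in> S" "x < r" by blast
    with real show ?thesis by auto
  next
    case PInf
    with assms obtain x where "x \<in> S" by blast
    with PInf show ?thesis by auto
  qed (use that in simp)
  then show ?thesis by (metis Inf_eq_bot_iff bot_ereal_def)
qed

lemma admissible_Theta_ereal_interval:
  assumes "admissible_Theta T"
  shows "Inf (ereal ` T) < Sup (ereal ` T)"
    and "T = {x. Inf (ereal ` T) \<le> ereal x \<and> ereal x \<le> Sup (ereal ` T)}"
proof -
  have "Inf (ereal ` T) < Sup (ereal ` T) \<and>
        T = {x. Inf (ereal ` T) \<le> ereal x \<and> ereal x \<le> Sup (ereal ` T)}"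
    using assms unfolding admissible_Theta_def
  proof (elim disjE exE conjE)
    assume T: "T = UNIV"
    have i: "Inf (ereal ` T) = -\<infinity>" unfolding T by (rule Inf_ereal_image_eq_MInf) (simp add: lt_ex)
    have s: "Sup (ereal ` T) = \<infinity>" unfolding T by (rule Sup_ereal_image_eq_PInf) (simp add: gt_ex)
    show ?thesis unfolding i s unfolding T by simp
  next
    fix a assume T: "T = {a..}"
    have i: "Inf (ereal ` T) = a" unfolding T by (rule Inf_eqI) auto
    have s: "Sup (ereal ` T) = \<infinity>"
      unfolding T
    proof (rule Sup_ereal_image_eq_PInf)
      show "\<exists>x\<in>{a..}. r < x" for r by (rule bexI[of _ "max a (r + 1)"]) auto
    qed
    show ?thesis unfolding i s unfolding T by auto
  next
    fix a assume T: "T = {..a}"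
    have i: "Inf (ereal ` T) = -\<infinity>"
      unfolding T
    proof (rule Inf_ereal_image_eq_MInf)
      show "\<exists>x\<in>{..a}. x < r" for r by (rule bexI[of _ "min a (r - 1)"]) auto
    qed
    have s: "Sup (ereal ` T) = a" unfolding T by (rule Sup_eqI) auto
    show ?thesis unfolding i s unfolding T by auto
  next
    fix a b assume ab: "a < b" and T: "T = {a..b}"
    have i: "Inf (ereal ` T) = a" unfolding T by (rule Inf_eqI) (use ab in auto)
    have s: "Sup (ereal ` T) = b" unfolding T by (rule Sup_eqI) (use ab in auto)
    show ?thesis unfolding i s unfolding T using ab by auto
  qed
  then show "Inf (ereal ` T) < Sup (ereal ` T)"
    and "T = {x. Inf (ereal ` T) \<le> ereal x \<and> ereal x \<le> Sup (ereal ` T)}" by (rule conjunct1, rule conjunct2)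
qed

lemma admissible_Theta_closed: "admissible_Theta T \<Longrightarrow> closed T"
  unfolding admissible_Theta_def by auto

lemma admissible_Theta_convex: "admissible_Theta T \<Longrightarrow> convex T"
  unfolding admissible_Theta_def by (auto intro: convex_real_interval)

definition ereal_Ioc :: "ereal \<Rightarrow> ereal \<Rightarrow> real set" where
  "ereal_Ioc a b = {x. a < ereal x \<and> ereal x \<le> b}"

lemma sets_ereal_Ioc [measurable]: "ereal_Ioc a b \<in> sets borel"
  unfolding ereal_Ioc_def by measurable

lemma wasserstein_nonneg: "0 \<le> wasserstein p G1 G2"
  unfolding wasserstein_def by simp

lemma wasserstein_distr_le:
  fixes M :: "'a measure" and f g :: "'a \<Rightarrow> real"
  assumes M: "prob_space M" and f: "f \<in> borel_measurable M" and g: "g \<in> borel_measurable M"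
    and p: "0 < p" and finite: "(\<integral>\<^sup>+x. ennreal (\<bar>g x - f x\<bar> powr p) \<partial>M) < \<infinity>"
  shows "wasserstein p (distr M borel f) (distr M borel g)
     \<le> enn2real (\<integral>\<^sup>+x. ennreal (\<bar>g x - f x\<bar> powr p) \<partial>M) powr (1/p)"
proof -
  have fg: "(\<lambda>x. (f x, g x)) \<in> M \<rightarrow>\<^sub>M (borel :: (real \<times> real) measure)"
    unfolding borel_prod[symmetric] using f g by (rule measurable_Pair)
  have fst: "fst \<in> (borel :: (real \<times> real) measure) \<rightarrow>\<^sub>M borel"
    unfolding borel_prod[symmetric] by (rule measurable_fst)
  have snd: "snd \<in> (borel :: (real \<times> real) measure) \<rightarrow>\<^sub>M borel"
    unfolding borel_prod[symmetric] by (rule measurable_snd)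
  define \<gamma> where "\<gamma> = distr M borel (\<lambda>x. (f x, g x))"
  have "\<gamma> \<in> couplings (distr M borel f) (distr M borel g)"
    unfolding couplings_def \<gamma>_def
    using prob_space.prob_space_distr[OF M fg] distr_distr[OF fst fg] distr_distr[OF snd fg]
    by (simp add: comp_def)
  then have "(INF \<gamma>\<in>couplings (distr M borel f) (distr M borel g). \<integral>\<^sup>+z. ennreal (\<bar>snd z - fst z\<bar> powr p) \<partial>\<gamma>)
      \<le> (\<integral>\<^sup>+z. ennreal (\<bar>snd z - fst z\<bar> powr p) \<partial>\<gamma>)"
    by (rule INF_lower)
  also have "\<dots> = (\<integral>\<^sup>+x. ennreal (\<bar>g x - f x\<bar> powr p) \<partial>M)"
    unfolding \<gamma>_def using fst snd by (subst nn_integral_distr[OF fg]) auto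
  finally have "enn2real (INF \<gamma>\<in>couplings (distr M borel f) (distr M borel g).
      \<integral>\<^sup>+z. ennreal (\<bar>snd z - fst z\<bar> powr p) \<partial>\<gamma>)
      \<le> enn2real (\<integral>\<^sup>+x. ennreal (\<bar>g x - f x\<bar> powr p) \<partial>M)"
    using finite by (intro enn2real_mono) auto
  then show ?thesis unfolding wasserstein_def using p by (intro powr_mono2) auto
qed

text \<open>Ends of SBA cells may be infinite, and \<^const>\<open>real_of_ereal\<close> sends \<open>\<plusminus>\<infinity>\<close> to \<open>0\<close>;
  clipping an end to a bound of the support first gives a meaningful real number.\<close>

definition real_max :: "real \<Rightarrow> ereal \<Rightarrow> real" where
  "real_max c e = (if e \<le> ereal c then c else real_of_ereal e)"

definition real_min :: "real \<Rightarrow> ereal \<Rightarrow> real" where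
  "real_min d e = (if ereal d \<le> e then d else real_of_ereal e)"

lemma real_max_bounds:
  assumes "e \<le> ereal x" "c \<le> x"
  shows "c \<le> real_max c e" "e \<le> ereal (real_max c e)" "real_max c e \<le> x"
    and "\<And>y. c \<le> y \<Longrightarrow> e < ereal y \<Longrightarrow> real_max c e \<le> y"
  using assms unfolding real_max_def by (cases e; auto)+

lemma real_min_bounds:
  assumes "ereal x \<le> e" "x \<le> d"
  shows "real_min d e \<le> d" "ereal (real_min d e) \<le> e" "x \<le> real_min d e"
    and "\<And>y. y \<le> d \<Longrightarrow> ereal y \<le> e \<Longrightarrow> y \<le> real_min d e"
  using assms unfolding real_min_def by (cases e; auto)+

lemma real_max_mono: "e \<le> e' \<Longrightarrow> e' \<le> ereal x \<Longrightarrow> real_max c e \<le> real_max c e'"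
  unfolding real_max_def by (cases e; cases e'; auto)

lemma real_min_mono: "e' \<le> e \<Longrightarrow> ereal x \<le> e' \<Longrightarrow> real_min d e' \<le> real_min d e"
  unfolding real_min_def by (cases e; cases e'; auto)

lemma real_max_ereal_ge: "t \<le> real_max c (ereal t)"
  unfolding real_max_def by auto

lemma real_min_ereal_le: "real_min d (ereal t) \<le> t"
  unfolding real_min_def by auto

lemma integral_indicator_mult_pos:
  fixes M :: "'a measure" and f :: "'a \<Rightarrow> real"
  assumes M: "prob_space M" and sets: "C \<in> sets M" "B \<in> sets M" "B \<subseteq> C"
    and f: "integrable M f" "AE y in M. y \<in> C \<longrightarrow> -e \<le> f y" "\<forall>y\<in>B. r \<le> f y"
    and e: "0 \<le> e" "e < r * measure M B"
  shows "0 < (\<integral>y. indicator C y * f y \<partial>M)"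
proof -
  interpret prob_space M by (fact M)
  have iB: "integrable M (\<lambda>y. r * indicator B y)"
    using integrable_mult_indicator[of B M "\<lambda>_. r"] sets(2) by (simp add: mult.commute)
  have "r * measure M B - e = (\<integral>y. r * indicator B y - e \<partial>M)"
    using Bochner_Integration.integral_diff[OF iB integrable_const[of e]] sets(2)
    by (simp add: prob_space)
  also have "\<dots> \<le> (\<integral>y. indicator C y * f y \<partial>M)"
  proof (rule integral_mono_AE)
    show "AE y in M. r * indicator B y - e \<le> indicator C y * f y"
      using f(2) by eventually_elim (use f(3) sets(3) e(1) in \<open>auto simp: indicator_def\<close>)
    show "integrable M (\<lambda>y. indicator C y * f y)"
      using integrable_mult_indicator[OF sets(1) f(1)] by simp
  qed (use iB in simp)
  finally show ?thesis using e(2) by linarith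
qed

lemma powr_add_le:
  fixes a b p :: real
  assumes "0 \<le> a" "0 \<le> b" "0 < p"
  shows "(a + b) powr p \<le> 2 powr p * (a powr p + b powr p)"
proof -
  have "(a + b) powr p \<le> (2 * max a b) powr p" using assms by (intro powr_mono2) auto
  also have "\<dots> = 2 powr p * max a b powr p" using assms by (simp add: powr_mult)
  also have "max a b powr p \<le> a powr p + b powr p" by (cases "a \<le> b") (auto simp: max_def)
  finally show ?thesis by simp
qed

lemma AE_in_support:
  fixes M :: "real measure"
  assumes "sets M = sets borel"
  shows "AE x in M. x \<in> support M"
proof -
  define F where "F = {ball y e | y e. 0 < e \<and> emeasure M (ball y e) = 0}"
  obtain F' where F': "F' \<subseteq> F" "countable F'" "\<Union>F' = \<Union>F"
    using Lindelof[of F] unfolding F_def by auto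
  have "- support M \<subseteq> \<Union>F"
  proof
    fix y assume "y \<in> - support M"
    then obtain e where "0 < e" "emeasure M (ball y e) = 0"
      unfolding support_def by (auto simp: not_less)
    then show "y \<in> \<Union>F" unfolding F_def by force
  qed
  moreover have "(\<Union>X\<in>F'. X) \<in> null_sets M"
  proof (rule null_sets_UN'[OF F'(2)])
    fix X assume "X \<in> F'"
    with F'(1) assms show "X \<in> null_sets M" unfolding F_def by (auto simp: null_sets_def)
  qed
  then have null: "\<Union>F' \<in> null_sets M" by simp
  moreover have "space M = UNIV" using sets_eq_imp_space_eq[OF assms] by simp
  ultimately show ?thesis using F'(3) by (intro AE_I'[OF null]) auto
qed

lemma support_subset_closed:
  fixes M :: "real measure"
  assumes "sets M = sets borel" "closed S" "emeasure M (- S) = 0"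
  shows "support M \<subseteq> S"
proof
  fix z assume z: "z \<in> support M"
  show "z \<in> S"
  proof (rule ccontr)
    assume "z \<notin> S"
    with assms(2) obtain e where e: "0 < e" "ball z e \<subseteq> - S"
      by (metis open_Compl open_contains_ball_eq closed_def ComplI)
    have "emeasure M (ball z e) \<le> emeasure M (- S)"
      using e assms by (intro emeasure_mono) (auto simp: borel_closed)
    moreover have "0 < emeasure M (ball z e)" using z e unfolding support_def by auto
    ultimately show False using assms(3) by simp
  qed
qed

definition clip :: "real \<Rightarrow> real \<Rightarrow> real" where
  "clip K x = max (-K) (min K x)"

definition grid_round :: "real \<Rightarrow> real \<Rightarrow> real" where
  "grid_round K x = of_int \<lfloor>K * clip K x\<rfloor> / K"

lemma clip_eq: "\<bar>x\<bar> \<le> K \<Longrightarrow> clip K x = x"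
  unfolding clip_def by auto

lemma grid_round_clip_dist: assumes "0 < K" shows "\<bar>grid_round K x - clip K x\<bar> \<le> 1 / K"
proof -
  define t where "t = K * clip K x"
  have "grid_round K x - clip K x = (of_int \<lfloor>t\<rfloor> - t) / K"
    unfolding grid_round_def t_def using assms by (simp add: field_simps)
  then have "\<bar>grid_round K x - clip K x\<bar> = (t - of_int \<lfloor>t\<rfloor>) / K" using assms by (simp add: abs_div)
  also have "\<dots> \<le> 1 / K" using assms by (intro divide_right_mono) linarith+
  finally show ?thesis .
qed

lemma grid_round_dist: assumes "1 \<le> K" shows "\<bar>grid_round K x - x\<bar> \<le> 1 + \<bar>x\<bar>"
proof -
  have "\<bar>clip K x - x\<bar> \<le> \<bar>x\<bar>" using assms unfolding clip_def by auto
  moreover have "1 / K \<le> 1" using assms by simp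
  ultimately show ?thesis using grid_round_clip_dist[of K x] assms by linarith
qed

lemma finite_range_grid_round: assumes "0 < K" shows "finite (range (grid_round K))"
proof -
  define M where "M = \<lceil>K * K\<rceil>"
  have "range (grid_round K) \<subseteq> (\<lambda>i. of_int i / K) ` {-M..M}"
  proof
    fix y assume "y \<in> range (grid_round K)"
    then obtain x where y: "y = grid_round K x" by auto
    have "\<bar>K * clip K x\<bar> \<le> K * K"
      using assms unfolding clip_def by (auto simp: abs_mult intro!: mult_left_mono)
    then have "-M \<le> \<lfloor>K * clip K x\<rfloor> \<and> \<lfloor>K * clip K x\<rfloor> \<le> M"
      unfolding M_def by (auto simp: abs_le_iff) linarith+
    then show "y \<in> (\<lambda>i. of_int i / K) ` {-M..M}" unfolding y grid_round_def by auto
  qed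
  then show ?thesis by (rule finite_subset) simp
qed

lemma grid_round_measurable [measurable]: "grid_round K \<in> borel_measurable borel"
  unfolding grid_round_def clip_def by measurable

section \<open>The SBA approximation as an image measure\<close>

locale sba_measure = prob_space G
  for G :: "real measure" and T :: "real set" +
  assumes admissible: "admissible_Theta T"
    and sets_G [measurable_cong]: "sets G = sets borel"
    and null_outside_T: "emeasure G (-T) = 0"
    and integrable_id: "integrable G (\<lambda>x. x)"
begin

abbreviation "infT \<equiv> Inf (ereal ` T)"
abbreviation "supT \<equiv> Sup (ereal ` T)"
abbreviation "mu \<equiv> sba G T"

lemma space_G [simp]: "space G = UNIV"
  using sets_G sets_eq_imp_space_eq by fastforce

lemma prob_UNIV [simp]: "prob UNIV = 1"
  using prob_space by simp

lemma infT_less_supT: "infT < supT"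
  using admissible_Theta_ereal_interval(1)[OF admissible] .

text \<open>Not a simp rule: its right-hand side mentions \<open>T\<close> again, and the simplifier loops.\<close>

lemma mem_T_iff: "x \<in> T \<longleftrightarrow> infT \<le> ereal x \<and> ereal x \<le> supT"
  using arg_cong[where f="\<lambda>S. x \<in> S", OF admissible_Theta_ereal_interval(2)[OF admissible]]
  by (simp only: mem_Collect_eq)

lemma infT_le: "x \<in> T \<Longrightarrow> infT \<le> ereal x"
  using mem_T_iff by blast

lemma le_supT: "x \<in> T \<Longrightarrow> ereal x \<le> supT"
  using mem_T_iff by blast

lemma sets_T [measurable]: "T \<in> sets borel"
  using admissible_Theta_closed[OF admissible] by (simp add: borel_closed)

lemma AE_in_T: "AE x in G. x \<in> T"
  using null_outside_T by (intro AE_I'[of "-T"]) (auto simp: null_sets_def sets.compl_sets)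

lemma mu_0 [simp]: "mu n 0 = infT"
  by (cases n; cases "n - 1") auto

lemma mu_top [simp]: "mu n (2^n) = supT"
  by (cases n; cases "n - 1") auto

lemma mu_even: assumes "i \<le> 2^k" shows "mu (Suc k) (2*i) = mu k i"
proof (cases k)
  case 0 with assms show ?thesis by (cases i) auto
next
  case (Suc j)
  consider "i = 0" | "i = 2^k" | "i \<noteq> 0" "i \<noteq> 2^k" by blast
  then show ?thesis
  proof cases
    case 2
    have "mu (Suc k) (2 * 2^k) = supT" using mu_top[of "Suc k"] by (simp del: mu_top)
    with 2 show ?thesis by simp
  qed (use Suc in auto)
qed

lemma mu_odd: assumes "1 \<le> k" "1 \<le> i" "i \<le> 2^k"
  shows "mu (Suc k) (2*i - 1) = bG G (mu k (i-1)) (mu k i)"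
proof -
  obtain j where k: "k = Suc j" using assms by (cases k) auto
  have odd: "odd (2*i - 1)" using assms by simp
  then have "2*i - 1 \<noteq> 2 ^ Suc (Suc j)" by (metis dvd_power even_numeral zero_less_Suc)
  moreover have "(2*i - 1 - 1) div 2 = i - 1" "(2*i - 1 + 1) div 2 = i" using assms by auto
  ultimately show ?thesis using assms odd unfolding k by (simp del: power_Suc)
qed

text \<open>Unfolding the recursion of \<^const>\<open>sba\<close> at concrete levels blows up goals;
  \<open>mu_even\<close> and \<open>mu_odd\<close> are used instead.\<close>

declare sba.simps(3) [simp del]

lemma measure_ereal_Ioc: assumes "a \<le> b"
  shows "distF G b - distF G a = measure G (ereal_Ioc a b)"
proof -
  have "ereal_Ioc a b = {x. ereal x \<le> b} - {x. ereal x \<le> a}"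
    unfolding ereal_Ioc_def by auto
  moreover have "{x. ereal x \<le> a} \<subseteq> {x. ereal x \<le> b}" using assms by auto
  ultimately show ?thesis unfolding distF_def by (simp add: finite_measure_Diff)
qed

lemma bG_eq: assumes "a \<le> b"
  shows "bG G a b = (if measure G (ereal_Ioc a b) > 0
     then ereal ((\<integral>x. indicator (ereal_Ioc a b) x * x \<partial>G) / measure G (ereal_Ioc a b)) else a)"
  using measure_ereal_Ioc[OF assms] unfolding bG_def ereal_Ioc_def by simp

lemma integrable_indicator_times_id: "integrable G (\<lambda>x. indicator A x * x)" if "A \<in> sets borel"
  using integrable_mult_indicator[of A G "\<lambda>x. x"] integrable_id that by simp

lemma integrable_indicator_times_const:
  "A \<in> sets borel \<Longrightarrow> integrable G (\<lambda>x. indicator A x * (r::real))"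
  using integrable_mult_indicator[of A G "\<lambda>_. r"] by simp

lemma integral_indicator_times_const [simp]:
  "A \<in> sets borel \<Longrightarrow> (\<integral>x. indicator A x * r \<partial>G) = r * measure G A"
  by (simp add: mult.commute[of _ r])

lemma integral_indicator_ge:
  assumes "A \<in> sets borel" "AE x in G. x \<in> A \<longrightarrow> r \<le> x"
  shows "r * measure G A \<le> (\<integral>x. indicator A x * x \<partial>G)"
proof -
  have "(\<integral>x. indicator A x * r \<partial>G) \<le> (\<integral>x. indicator A x * x \<partial>G)"
    using assms(2)
    by (intro integral_mono_AE integrable_indicator_times_id assms(1) integrable_indicator_times_const)
       (auto elim!: AE_mp simp: indicator_def)
  then show ?thesis using assms(1) by (simp add: mult.commute)
qed

lemma integral_indicator_le:
  assumes "A \<in> sets borel" "AE x in G. x \<in> A \<longrightarrow> x \<le> r"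
  shows "(\<integral>x. indicator A x * x \<partial>G) \<le> r * measure G A"
proof -
  have "(\<integral>x. indicator A x * x \<partial>G) \<le> (\<integral>x. indicator A x * r \<partial>G)"
    using assms(2)
    by (intro integral_mono_AE integrable_indicator_times_id assms(1) integrable_indicator_times_const)
       (auto elim!: AE_mp simp: indicator_def)
  then show ?thesis using assms(1) by (simp add: mult.commute)
qed

lemma integral_indicator_diff_const:
  assumes "A \<in> sets borel"
  shows "(\<integral>y. indicator A y * (y - a) \<partial>G) = (\<integral>y. indicator A y * y \<partial>G) - a * measure G A"
    and "(\<integral>y. indicator A y * (a - y) \<partial>G) = a * measure G A - (\<integral>y. indicator A y * y \<partial>G)"
  using Bochner_Integration.integral_diff[OF integrable_indicator_times_id
      integrable_indicator_times_const, OF assms assms]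
    Bochner_Integration.integral_diff[OF integrable_indicator_times_const
      integrable_indicator_times_id, OF assms assms]
    assms by (simp_all add: right_diff_distrib)

lemma bG_between: assumes "a \<le> b" shows "a \<le> bG G a b" "bG G a b \<le> b"
proof -
  let ?P = "measure G (ereal_Ioc a b)" and ?I = "\<integral>x. indicator (ereal_Ioc a b) x * x \<partial>G"
  have "a \<le> ereal (?I / ?P) \<and> ereal (?I / ?P) \<le> b" if P: "?P > 0"
  proof
    show "a \<le> ereal (?I / ?P)"
    proof (cases a)
      case (real r)
      have "r * ?P \<le> ?I" by (rule integral_indicator_ge) (auto simp: ereal_Ioc_def real)
      with P real show ?thesis by (simp add: field_simps)
    qed (use P assms in \<open>auto simp: ereal_Ioc_def\<close>)
    show "ereal (?I / ?P) \<le> b"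
    proof (cases b)
      case (real r)
      have "?I \<le> r * ?P" by (rule integral_indicator_le) (auto simp: ereal_Ioc_def real)
      with P real show ?thesis by (simp add: field_simps)
    qed (use P assms in \<open>auto simp: ereal_Ioc_def\<close>)
  qed
  with assms show "a \<le> bG G a b" "bG G a b \<le> b" by (auto simp: bG_eq)
qed

lemma mean_between_infT_supT: "infT \<le> ereal (\<integral>x. x \<partial>G)" "ereal (\<integral>x. x \<partial>G) \<le> supT"
proof -
  show "infT \<le> ereal (\<integral>x. x \<partial>G)"
  proof (cases infT)
    case (real r)
    have "AE x in G. r \<le> x" using AE_in_T by eventually_elim (metis infT_le real ereal_less_eq(3))
    then have "(\<integral>x. r \<partial>G) \<le> (\<integral>x. x \<partial>G)" by (intro integral_mono_AE integrable_id) auto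
    with real show ?thesis by simp
  next
    case PInf
    with infT_less_supT show ?thesis by simp
  qed simp
  show "ereal (\<integral>x. x \<partial>G) \<le> supT"
  proof (cases supT)
    case (real r)
    have "AE x in G. x \<le> r" using AE_in_T by eventually_elim (metis le_supT real ereal_less_eq(3))
    then have "(\<integral>x. x \<partial>G) \<le> (\<integral>x. r \<partial>G)" by (intro integral_mono_AE integrable_id) auto
    with real show ?thesis by simp
  next
    case MInf
    with infT_less_supT show ?thesis by simp
  qed simp
qed

lemma mu_le_Suc: "l < 2^n \<Longrightarrow> mu n l \<le> mu n (Suc l)"
proof (induction n arbitrary: l)
  case 0
  then show ?case using infT_less_supT by simp
next
  case (Suc k)
  show ?case
  proof (cases "k = 0")
    case True
    with Suc.prems have "l = 0 \<or> l = 1" by auto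
    with True show ?thesis using mean_between_infT_supT by auto
  next
    case k: False
    show ?thesis
    proof (cases "even l")
      case True
      then obtain i where l: "l = 2*i" by blast
      with Suc.prems have i: "i < 2^k" by simp
      have "mu (Suc k) l = mu k i" using mu_even[of i k] i l by simp
      moreover have "mu (Suc k) (Suc l) = bG G (mu k i) (mu k (Suc i))"
        using mu_odd[of k "Suc i"] i l k by simp
      ultimately show ?thesis using bG_between(1) Suc.IH[OF i] by simp
    next
      case False
      then obtain i where l: "l = 2*i + 1" using oddE by blast
      with Suc.prems have i: "i < 2^k" by simp
      have "mu (Suc k) (Suc l) = mu k (Suc i)" using mu_even[of "Suc i" k] i l by simp
      moreover have "mu (Suc k) l = bG G (mu k i) (mu k (Suc i))"
        using mu_odd[of k "Suc i"] i l k by simp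
      ultimately show ?thesis using bG_between(2) Suc.IH[OF i] by simp
    qed
  qed
qed

lemma mu_mono: assumes "i \<le> j" "j \<le> 2^n" shows "mu n i \<le> mu n j"
  using assms
proof (induction j rule: dec_induct)
  case (step j)
  then show ?case using mu_le_Suc[of j n] order_trans by fastforce
qed simp

abbreviation "cell n l \<equiv> sba_int G T n l"

lemma cell_eq: assumes "1 \<le> l"
  shows "cell n l = {x. (mu n (l-1) < ereal x \<or> (l = 1 \<and> ereal x = infT)) \<and> ereal x \<le> mu n l}"
proof (cases "l = 1")
  case True
  then show ?thesis unfolding sba_int_def by (cases infT) auto
qed (auto simp: sba_int_def)

lemma sets_cell [measurable]: "1 \<le> l \<Longrightarrow> cell n l \<in> sets borel"
  unfolding cell_eq by measurable

lemma cell_subset: "1 \<le> l \<Longrightarrow> cell n l \<subseteq> ereal_Ioc (mu n (l-1)) (mu n l) \<union> {x. ereal x = infT}"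
  unfolding cell_eq ereal_Ioc_def by auto

lemma cell_disjoint_less: assumes "1 \<le> i" "i < j" "j \<le> 2^n" shows "cell n i \<inter> cell n j = {}"
proof -
  have "mu n i \<le> mu n (j-1)" using assms by (intro mu_mono) auto
  with assms show ?thesis by (auto simp: cell_eq)
qed

lemma cell_disjoint: "i \<in> {1..2^n} \<Longrightarrow> j \<in> {1..2^n} \<Longrightarrow> i \<noteq> j \<Longrightarrow> cell n i \<inter> cell n j = {}"
  using cell_disjoint_less[of i j n] cell_disjoint_less[of j i n] by (cases "i < j") auto

lemma cell_cover: assumes "x \<in> T" shows "\<exists>l\<in>{1..2^n}. x \<in> cell n l"
proof -
  have x: "infT \<le> ereal x" "ereal x \<le> supT" using assms by (rule infT_le, rule le_supT)
  define l where "l = (LEAST l. ereal x \<le> mu n l)"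
  have "ereal x \<le> mu n (2^n)" using x by simp
  then have l: "ereal x \<le> mu n l" "l \<le> 2^n"
    unfolding l_def by (rule LeastI, rule Least_le)
  show ?thesis
  proof (cases "l = 0")
    case True
    then have "x \<in> cell n 1" using l x mu_mono[of 0 1 n] by (simp add: cell_eq)
    then show ?thesis by force
  next
    case False
    have "\<not> ereal x \<le> mu n (l - 1)"
      using False not_less_Least[of "l - 1" "\<lambda>l. ereal x \<le> mu n l"] unfolding l_def by simp
    then have "x \<in> cell n l" using l False by (simp add: cell_eq not_le)
    with False l show ?thesis by force
  qed
qed

definition sba_atom :: "nat \<Rightarrow> nat \<Rightarrow> real" where
  "sba_atom n l = real_of_ereal (mu (Suc n) (2*l - 1))"

definition sba_map :: "nat \<Rightarrow> real \<Rightarrow> real" where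
  "sba_map n x = (\<Sum>l\<in>{1..2^n}. indicator (cell n l) x * sba_atom n l)"

lemma sba_map_measurable [measurable]: "sba_map n \<in> borel_measurable borel"
  unfolding sba_map_def by measurable

lemma sba_map_cell: assumes "l \<in> {1..2^n}" "x \<in> cell n l" shows "sba_map n x = sba_atom n l"
proof -
  have "x \<notin> cell n j" if "j \<in> {1..2^n}" "j \<noteq> l" for j
    using cell_disjoint[of l n j] assms that by auto
  then have "sba_map n x = (\<Sum>j\<in>{l}. indicator (cell n j) x * sba_atom n j)"
    unfolding sba_map_def using assms by (intro sum.mono_neutral_right) auto
  with assms show ?thesis by simp
qed

lemma emeasure_distr_sba_map:
  assumes A: "A \<in> sets borel"
  shows "emeasure (distr G borel (sba_map n)) A
       = (\<Sum>l\<in>{1..2^n}. ennreal (measure G (cell n l)) * indicator A (sba_atom n l))"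
proof -
  let ?U = "\<Union>l\<in>{1..2^n}. cell n l"
  let ?L = "{l\<in>{1..2^n}. sba_atom n l \<in> A}"
  have pre: "sba_map n -` A \<in> sets borel"
    using measurable_sets[OF sba_map_measurable A] by simp
  have "emeasure (distr G borel (sba_map n)) A = emeasure G (sba_map n -` A)"
    using A by (simp add: emeasure_distr)
  also have "\<dots> = emeasure G (sba_map n -` A \<inter> ?U)"
  proof (rule emeasure_eq_AE)
    show "AE x in G. x \<in> sba_map n -` A \<longleftrightarrow> x \<in> sba_map n -` A \<inter> ?U"
      using AE_in_T by eventually_elim (use cell_cover[of _ n] in blast)
  qed (use pre in auto)
  also have "sba_map n -` A \<inter> ?U = (\<Union>l\<in>?L. cell n l)"
    using sba_map_cell by fastforce
  also have "emeasure G (\<Union>l\<in>?L. cell n l) = (\<Sum>l\<in>?L. emeasure G (cell n l))"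
  proof (rule sum_emeasure[symmetric])
    show "disjoint_family_on (cell n) ?L"
      unfolding disjoint_family_on_def using cell_disjoint by auto
  qed auto
  also have "\<dots> = (\<Sum>l\<in>{1..2^n}. if sba_atom n l \<in> A then emeasure G (cell n l) else 0)"
    by (rule sum.inter_filter) auto
  also have "\<dots> = (\<Sum>l\<in>{1..2^n}. ennreal (measure G (cell n l)) * indicator A (sba_atom n l))"
    by (intro sum.cong) (auto simp: emeasure_eq_measure)
  finally show ?thesis .
qed

lemma sba_approx_eq_distr: "sba_approx G T n = distr G borel (sba_map n)"
proof -
  let ?D = "distr G borel (sba_map n)"
  have "sba_approx G T n = measure_of UNIV (sets borel) (emeasure ?D)"
    unfolding sba_approx_def sba_atom_def[symmetric]
  proof (rule measure_of_eq)
    fix A :: "real set" assume "A \<in> sigma_sets UNIV (sets borel)"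
    then have "A \<in> sets borel" using sets.sigma_sets_eq[of "borel :: real measure"] by simp
    from emeasure_distr_sba_map[OF this, of n] show "(\<Sum>l\<in>{1..2^n}.
        ennreal (measure G (cell n l)) * indicator A (sba_atom n l)) = emeasure ?D A" by (rule sym)
  qed simp
  also have "\<dots> = ?D" using measure_of_of_measure[of ?D] by simp
  finally show ?thesis .
qed

lemma distr_id_G: "distr G borel (\<lambda>x. x) = G"
  by (rule distr_id2) (simp add: sets_G)

lemma measurable_G_sba_map: "sba_map n \<in> borel_measurable G"
  by (subst measurable_cong_sets[OF sets_G refl]) simp

lemma measurable_G_id: "(\<lambda>x. x) \<in> borel_measurable G"
  by (subst measurable_cong_sets[OF sets_G refl]) simp

primrec cell_index :: "real \<Rightarrow> nat \<Rightarrow> nat" where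
  "cell_index x 0 = 1"
| "cell_index x (Suc k) =
     (if ereal x \<le> mu (Suc k) (2 * cell_index x k - 1) then 2 * cell_index x k - 1 else 2 * cell_index x k)"

declare cell_index.simps(2) [simp del]

abbreviation "left_end x k \<equiv> mu k (cell_index x k - 1)"
abbreviation "right_end x k \<equiv> mu k (cell_index x k)"
abbreviation "cut_point x k \<equiv> mu (Suc k) (2 * cell_index x k - 1)"

lemma cell_index:
  assumes "x \<in> T"
  shows "1 \<le> cell_index x k" "cell_index x k \<le> 2^k"
    and "left_end x k < ereal x \<or> (cell_index x k = 1 \<and> ereal x = infT)"
    and "ereal x \<le> right_end x k"
proof -
  have "1 \<le> cell_index x k \<and> cell_index x k \<le> 2^k \<and>
    (left_end x k < ereal x \<or> (cell_index x k = 1 \<and> ereal x = infT)) \<and> ereal x \<le> right_end x k"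
  proof (induction k)
    case 0
    show ?case using infT_le[OF assms] le_supT[OF assms] by (auto simp: le_less)
  next
    case (Suc k)
    define q where "q = cell_index x k"
    have q: "1 \<le> q" "q \<le> 2^k" using Suc q_def by auto
    have e1: "mu (Suc k) (2*(q-1)) = mu k (q-1)" using q by (intro mu_even) auto
    have e2: "mu (Suc k) (2*q) = mu k q" using q by (intro mu_even) auto
    show ?case
    proof (cases "ereal x \<le> mu (Suc k) (2 * q - 1)")
      case True
      then have "cell_index x (Suc k) = 2*q - 1" by (simp add: q_def cell_index.simps(2))
      moreover have "2*q - 1 - 1 = 2*(q-1)" by simp
      ultimately show ?thesis using True Suc q e1 unfolding q_def by auto
    next
      case False
      then have "cell_index x (Suc k) = 2*q" by (simp add: q_def cell_index.simps(2))
      then show ?thesis using False Suc q e2 unfolding q_def by (auto simp: not_le)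
    qed
  qed
  then show "1 \<le> cell_index x k" "cell_index x k \<le> 2^k"
    and "left_end x k < ereal x \<or> (cell_index x k = 1 \<and> ereal x = infT)"
    and "ereal x \<le> right_end x k" by auto
qed

lemma mem_cell_index: "x \<in> T \<Longrightarrow> x \<in> cell k (cell_index x k)"
  using cell_index[of x k] by (simp add: cell_eq)

lemma sba_map_eq_cut_point: "x \<in> T \<Longrightarrow> sba_map n x = real_of_ereal (cut_point x n)"
  using sba_map_cell[of "cell_index x n" n x] cell_index[of x n] mem_cell_index[of x n]
  by (simp add: sba_atom_def)

lemma ends_Suc:
  assumes "x \<in> T"
  shows "left_end x (Suc k) = (if ereal x \<le> cut_point x k then left_end x k else cut_point x k)"
    and "right_end x (Suc k) = (if ereal x \<le> cut_point x k then cut_point x k else right_end x k)"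
proof -
  define q where "q = cell_index x k"
  have q: "1 \<le> q" "q \<le> 2^k" using cell_index[OF assms, of k] q_def by auto
  have "mu (Suc k) (2*(q-1)) = mu k (q-1)" "mu (Suc k) (2*q) = mu k q"
    using q by (auto intro: mu_even)
  moreover have "2*q - 1 - 1 = 2*(q-1)" by simp
  ultimately show "left_end x (Suc k) = (if ereal x \<le> cut_point x k then left_end x k else cut_point x k)"
    "right_end x (Suc k) = (if ereal x \<le> cut_point x k then cut_point x k else right_end x k)"
    unfolding q_def by (auto simp: cell_index.simps(2))
qed

lemma cut_point_eq_bG: "x \<in> T \<Longrightarrow> 1 \<le> k \<Longrightarrow> cut_point x k = bG G (left_end x k) (right_end x k)"
  using cell_index[of x k] by (intro mu_odd) auto

lemma cut_point_between: assumes "x \<in> T" shows "left_end x k \<le> cut_point x k" "cut_point x k \<le> right_end x k"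
proof -
  define q where "q = cell_index x k"
  have q: "1 \<le> q" "q \<le> 2^k" using cell_index[OF assms, of k] q_def by auto
  have "mu (Suc k) (2*(q-1)) \<le> mu (Suc k) (2*q - 1)" "mu (Suc k) (2*q - 1) \<le> mu (Suc k) (2*q)"
    using q by (auto intro: mu_mono)
  moreover have "mu (Suc k) (2*(q-1)) = mu k (q-1)" "mu (Suc k) (2*q) = mu k q"
    using q by (auto intro: mu_even)
  ultimately show "left_end x k \<le> cut_point x k" "cut_point x k \<le> right_end x k"
    unfolding q_def by simp_all
qed

lemma ends_nested: assumes "x \<in> T"
  shows "left_end x k \<le> left_end x (Suc k)" "right_end x (Suc k) \<le> right_end x k"
  using ends_Suc[OF assms, of k] cut_point_between[OF assms, of k] by auto

section \<open>Measures supported on a compact interval\<close>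

lemma bG_strictly_between:
  assumes LR: "L \<le> ereal lo" "ereal hi \<le> R"
    and conc: "AE y in G. y \<in> ereal_Ioc L R \<longrightarrow> lo \<le> y \<and> y \<le> hi"
    and B: "B \<in> sets borel" "B \<subseteq> {lo<..hi}" "\<forall>y\<in>B. lam + r \<le> y \<and> y \<le> rho - r"
    and close: "lo \<le> lam" "lam - lo < r * measure G B" "rho \<le> hi" "hi - rho < r * measure G B"
  shows "ereal lam < bG G L R \<and> bG G L R < ereal rho"
proof -
  define C where "C = ereal_Ioc L R"
  have BC: "B \<subseteq> C"
  proof
    fix y assume "y \<in> B"
    with B(2) have "lo < y" "y \<le> hi" by auto
    have "L < ereal y" by (rule le_less_trans[OF LR(1)]) (simp add: \<open>lo < y\<close>)
    moreover have "ereal y \<le> R" by (rule order_trans[OF _ LR(2)]) (simp add: \<open>y \<le> hi\<close>)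
    ultimately show "y \<in> C" unfolding C_def ereal_Ioc_def by simp
  qed
  have "0 < r * measure G B" using close by linarith
  then have "0 < measure G B" by (simp add: zero_less_mult_iff)
  then obtain y where "y \<in> B" by fastforce
  with BC have "L \<le> R" unfolding C_def ereal_Ioc_def by auto
  have P: "0 < measure G C"
    using \<open>0 < measure G B\<close> finite_measure_mono[OF BC] unfolding C_def by simp
  let ?I = "\<integral>y. indicator C y * y \<partial>G"
  have "0 < (\<integral>y. indicator C y * (y - lam) \<partial>G)"
    by (rule integral_indicator_mult_pos[where B=B and r=r and e="lam - lo"])
       (use prob_space_axioms BC B close conc in \<open>auto simp: C_def integrable_id elim!: AE_mp\<close>)
  then have lower: "lam * measure G C < ?I" unfolding C_def by (simp add: integral_indicator_diff_const)
  have "0 < (\<integral>y. indicator C y * (rho - y) \<partial>G)"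
    by (rule integral_indicator_mult_pos[where B=B and r=r and e="hi - rho"])
       (use prob_space_axioms BC B close conc in \<open>auto simp: C_def integrable_id elim!: AE_mp\<close>)
  then have upper: "?I < rho * measure G C" unfolding C_def by (simp add: integral_indicator_diff_const)
  have "bG G L R = ereal (?I / measure G C)" using bG_eq[OF \<open>L \<le> R\<close>] P unfolding C_def by simp
  with P lower upper show ?thesis by (simp add: field_simps)
qed

lemma AE_ereal_Ioc_clipped:
  assumes "AE y in G. c \<le> y \<and> y \<le> d" "L \<le> ereal x" "ereal x \<le> R" "c \<le> x" "x \<le> d"
  shows "AE y in G. y \<in> ereal_Ioc L R \<longrightarrow> real_max c L \<le> y \<and> y \<le> real_min d R"
  using assms(1)
proof eventually_elim
  case (elim y)
  then show ?case
    using real_max_bounds(4)[OF assms(2,4)] real_min_bounds(4)[OF assms(3,5)]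
    unfolding ereal_Ioc_def by auto
qed

lemma bG_eventually_between_limits:
  fixes L R :: "nat \<Rightarrow> ereal"
  assumes x: "c \<le> x" "x \<le> d"
    and conc: "AE y in G. c \<le> y \<and> y \<le> d"
    and supp: "\<And>z e. c \<le> z \<Longrightarrow> z \<le> d \<Longrightarrow> 0 < e \<Longrightarrow> 0 < emeasure G (ball z e)"
    and Lx: "\<And>n. L n \<le> ereal x" and Rx: "\<And>n. ereal x \<le> R n"
    and lo: "(\<lambda>n. real_max c (L n)) \<longlonglongrightarrow> lam" "\<And>n. real_max c (L n) \<le> lam"
    and hi: "(\<lambda>n. real_min d (R n)) \<longlonglongrightarrow> rho" "\<And>n. rho \<le> real_min d (R n)"
    and "lam < rho"
  shows "\<forall>\<^sub>F n in sequentially. ereal lam < bG G (L n) (R n) \<and> bG G (L n) (R n) < ereal rho"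
proof -
  define r where "r = (rho - lam) / 4"
  define B where "B = ball ((lam + rho) / 2) r"
  have "0 < r" unfolding r_def using \<open>lam < rho\<close> by simp
  have B_bounds: "\<forall>y\<in>B. lam + r \<le> y \<and> y \<le> rho - r"
  proof
    fix y assume "y \<in> B"
    then have "\<bar>(lam + rho) / 2 - y\<bar> < r" unfolding B_def by (simp add: dist_real_def)
    then have "(lam + rho) / 2 - y < r" "y - (lam + rho) / 2 < r" by auto
    with r_def show "lam + r \<le> y \<and> y \<le> rho - r" by (simp add: field_simps)
  qed
  have "c \<le> (lam + rho) / 2" "(lam + rho) / 2 \<le> d"
    using real_max_bounds(1)[OF Lx x(1), of 0] lo(2)[of 0] real_min_bounds(1)[OF Rx x(2), of 0]
      hi(2)[of 0] \<open>lam < rho\<close> by auto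
  then have "0 < measure G B"
    using supp \<open>0 < r\<close> unfolding B_def by (simp add: emeasure_eq_measure)
  then have "0 < r * measure G B" using \<open>0 < r\<close> by simp
  then have "\<forall>\<^sub>F n in sequentially. lam - r * measure G B < real_max c (L n)"
    and "\<forall>\<^sub>F n in sequentially. real_min d (R n) < rho + r * measure G B"
    by (auto intro: order_tendstoD lo(1) hi(1))
  then show ?thesis
  proof eventually_elim
    case (elim n)
    have "B \<subseteq> {real_max c (L n)<..real_min d (R n)}"
      using B_bounds \<open>0 < r\<close> lo(2)[of n] hi(2)[of n] by fastforce
    then show ?case
      using elim lo(2)[of n] hi(2)[of n] B_bounds
      by (intro bG_strictly_between[OF real_max_bounds(2)[OF Lx x(1)] real_min_bounds(2)[OF Rx x(2)]
            AE_ereal_Ioc_clipped[OF conc Lx Rx x]]) (auto simp: B_def)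
  qed
qed

lemma nested_cells_shrink:
  fixes L R :: "nat \<Rightarrow> ereal"
  assumes x: "c \<le> x" "x \<le> d"
    and conc: "AE y in G. c \<le> y \<and> y \<le> d"
    and supp: "\<And>z e. c \<le> z \<Longrightarrow> z \<le> d \<Longrightarrow> 0 < e \<Longrightarrow> 0 < emeasure G (ball z e)"
    and Lx: "\<And>n. L n \<le> ereal x" and Rx: "\<And>n. ereal x \<le> R n"
    and L_mono: "\<And>n. L n \<le> L (Suc n)" and R_mono: "\<And>n. R (Suc n) \<le> R n"
    and split: "\<And>n. 1 \<le> n \<Longrightarrow> R (Suc n) = bG G (L n) (R n) \<or> L (Suc n) = bG G (L n) (R n)"
  shows "(\<lambda>n. real_min d (R n) - real_max c (L n)) \<longlonglongrightarrow> 0"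
proof -
  define lo where "lo n = real_max c (L n)" for n
  define hi where "hi n = real_min d (R n)" for n
  have "incseq lo" unfolding lo_def by (intro incseq_SucI real_max_mono[OF L_mono Lx])
  have "decseq hi" unfolding hi_def by (intro decseq_SucI real_min_mono[OF R_mono Rx])
  have lo_x: "lo n \<le> x" and hi_x: "x \<le> hi n" for n
    unfolding lo_def hi_def using real_max_bounds(3)[OF Lx x(1)] real_min_bounds(3)[OF Rx x(2)] by auto
  define lam where "lam = (SUP n. lo n)"
  define rho where "rho = (INF n. hi n)"
  have bdd: "bdd_above (range lo)" "bdd_below (range hi)"
    using lo_x hi_x by (auto intro: bdd_aboveI[of _ x] bdd_belowI[of _ x])
  have lo_lim: "lo \<longlonglongrightarrow> lam" unfolding lam_def by (rule LIMSEQ_incseq_SUP[OF bdd(1) \<open>incseq lo\<close>])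
  have hi_lim: "hi \<longlonglongrightarrow> rho" unfolding rho_def by (rule LIMSEQ_decseq_INF[OF bdd(2) \<open>decseq hi\<close>])
  have lo_lam: "lo n \<le> lam" for n unfolding lam_def by (rule cSUP_upper[OF _ bdd(1)]) simp
  have rho_hi: "rho \<le> hi n" for n unfolding rho_def by (rule cINF_lower[OF bdd(2)]) simp
  have "lam \<le> x" unfolding lam_def using lo_x by (intro cSUP_least) auto
  moreover have "x \<le> rho" unfolding rho_def using hi_x by (intro cINF_greatest) auto
  moreover have "\<not> lam < rho"
  proof
    assume "lam < rho"
    txt \<open>Every cut point becomes an end of the next cell, so it cannot lie strictly inside
      \<open>(lam, rho)\<close>.\<close>
    from bG_eventually_between_limits[OF x conc supp Lx Rx lo_lim[unfolded lo_def] lo_lam[unfolded lo_def]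
        hi_lim[unfolded hi_def] rho_hi[unfolded hi_def] this]
    obtain N0 where N0: "\<And>n. N0 \<le> n \<Longrightarrow> ereal lam < bG G (L n) (R n) \<and> bG G (L n) (R n) < ereal rho"
      unfolding eventually_sequentially by blast
    define N where "N = Suc N0"
    have m: "ereal lam < bG G (L N) (R N)" "bG G (L N) (R N) < ereal rho"
      using N0[of N] unfolding N_def by auto
    from split[of N] show False
    proof
      assume "R (Suc N) = bG G (L N) (R N)"
      with m obtain t where "R (Suc N) = ereal t" "t < rho" by (cases "bG G (L N) (R N)") auto
      then show False using real_min_ereal_le[of d t] rho_hi[of "Suc N"] unfolding hi_def by simp
    next
      assume "L (Suc N) = bG G (L N) (R N)"
      with m obtain t where "L (Suc N) = ereal t" "lam < t" by (cases "bG G (L N) (R N)") auto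
      then show False using real_max_ereal_ge[of t c] lo_lam[of "Suc N"] unfolding lo_def by simp
    qed (simp add: N_def)
  qed
  ultimately have "rho - lam = 0" by simp
  with tendsto_diff[OF hi_lim lo_lim] show ?thesis unfolding lo_def hi_def by simp
qed

lemma bG_within_clipped:
  assumes conc: "AE y in G. c \<le> y \<and> y \<le> d"
    and x: "L \<le> ereal x" "ereal x \<le> R" "c \<le> x" "x \<le> d"
    and P: "0 < measure G (ereal_Ioc L R)"
  shows "real_max c L \<le> real_of_ereal (bG G L R) \<and> real_of_ereal (bG G L R) \<le> real_min d R"
proof -
  let ?P = "measure G (ereal_Ioc L R)" and ?I = "\<integral>y. indicator (ereal_Ioc L R) y * y \<partial>G"
  have "L \<le> R" using x(1,2) by (rule order_trans)
  with P have bG: "bG G L R = ereal (?I / ?P)" by (simp add: bG_eq)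
  note AE = AE_ereal_Ioc_clipped[OF conc x]
  have "real_max c L * ?P \<le> ?I"
    by (rule integral_indicator_ge) (use AE in \<open>auto elim: AE_mp\<close>)
  moreover have "?I \<le> real_min d R * ?P"
    by (rule integral_indicator_le) (use AE in \<open>auto elim: AE_mp\<close>)
  ultimately show ?thesis using P bG by (simp add: pos_le_divide_eq pos_divide_le_eq)
qed

lemma support_interval:
  assumes "support G = {c..d}"
  shows "{c..d} \<subseteq> T" and "AE y in G. c \<le> y \<and> y \<le> d"
    and "\<And>z e. c \<le> z \<Longrightarrow> z \<le> d \<Longrightarrow> 0 < e \<Longrightarrow> 0 < emeasure G (ball z e)"
proof -
  show "{c..d} \<subseteq> T"
    using support_subset_closed[OF sets_G admissible_Theta_closed[OF admissible] null_outside_T] assms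
    by simp
  show "AE y in G. c \<le> y \<and> y \<le> d" using AE_in_support[OF sets_G] assms by simp
  show "\<And>z e. c \<le> z \<Longrightarrow> z \<le> d \<Longrightarrow> 0 < e \<Longrightarrow> 0 < emeasure G (ball z e)"
    using assms by (auto simp: support_def)
qed

lemma atom_at_infT_if_null_Ioc_cell:
  assumes "x \<in> T" "0 < measure G (cell n (cell_index x n))"
    and null: "measure G (ereal_Ioc (left_end x n) (right_end x n)) = 0"
  shows "cell_index x n = 1" and "0 < measure G {y. ereal y = infT}"
proof -
  note index = cell_index[OF assms(1), of n]
  show "cell_index x n = 1"
  proof (rule ccontr)
    assume "cell_index x n \<noteq> 1"
    then have "cell n (cell_index x n) = ereal_Ioc (left_end x n) (right_end x n)"
      using index by (simp add: cell_eq ereal_Ioc_def)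
    with assms(2) null show False by simp
  qed
  have "measure G (cell n (cell_index x n))
      \<le> measure G (ereal_Ioc (left_end x n) (right_end x n) \<union> {y. ereal y = infT})"
    using cell_subset[of "cell_index x n" n] index by (intro finite_measure_mono) auto
  also have "\<dots> \<le> measure G (ereal_Ioc (left_end x n) (right_end x n)) + measure G {y. ereal y = infT}"
    by (intro measure_Un_le) auto
  finally show "0 < measure G {y. ereal y = infT}" using assms(2) null by simp
qed

lemma sba_map_within_clipped_ends:
  assumes supp: "support G = {c..d}" and x: "c \<le> x" "x \<le> d" and n: "1 \<le> n"
    and pos: "0 < measure G (cell n (cell_index x n))"
  shows "real_max c (left_end x n) \<le> sba_map n x \<and> sba_map n x \<le> real_min d (right_end x n)"
proof -
  note cdT = support_interval(1)[OF supp] and conc = support_interval(2)[OF supp]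
  with x have xT: "x \<in> T" by auto
  have Lx: "left_end x n \<le> ereal x" and Rx: "ereal x \<le> right_end x n"
    using cell_index[OF xT, of n] by auto
  have fx: "sba_map n x = real_of_ereal (bG G (left_end x n) (right_end x n))"
    using sba_map_eq_cut_point[OF xT] cut_point_eq_bG[OF xT n] by simp
  show ?thesis
  proof (cases "0 < measure G (ereal_Ioc (left_end x n) (right_end x n))")
    case True
    then show ?thesis unfolding fx by (rule bG_within_clipped[OF conc Lx Rx x])
  next
    case False
    then have P0: "measure G (ereal_Ioc (left_end x n) (right_end x n)) = 0"
      using measure_nonneg[of G "ereal_Ioc (left_end x n) (right_end x n)"] by linarith
    note atom = atom_at_infT_if_null_Ioc_cell[OF xT pos P0]
    then obtain a where a: "infT = ereal a" "0 < measure G {a}" by (cases infT) auto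
    have "c \<le> a \<and> a \<le> d"
    proof (rule ccontr)
      assume "\<not> (c \<le> a \<and> a \<le> d)"
      with conc have "AE y in G. y \<noteq> a" by (auto elim: AE_mp)
      then have "{a} \<in> null_sets G" using AE_iff_null_sets[of "{a}" G] by simp
      with a(2) show False by (simp add: emeasure_eq_measure null_sets_def)
    qed
    moreover have "infT \<le> ereal c" using cdT x by (intro infT_le) auto
    ultimately have "a = c" using a by simp
    then have "sba_map n x = c" and "real_max c (left_end x n) = c"
      using fx bG_eq[OF order_trans[OF Lx Rx]] P0 atom(1) a by (simp_all add: real_max_def)
    moreover have "c \<le> real_min d (right_end x n)" using real_min_bounds(3)[OF Rx x(2)] x by simp
    ultimately show ?thesis by simp
  qed
qed

lemma AE_cells_pos_measure: "AE x in G. \<forall>n l. 1 \<le> l \<longrightarrow> x \<in> cell n l \<longrightarrow> 0 < measure G (cell n l)"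
proof -
  have "AE x in G. 1 \<le> l \<longrightarrow> x \<in> cell n l \<longrightarrow> 0 < measure G (cell n l)" for n l
  proof (cases "1 \<le> l \<and> measure G (cell n l) = 0")
    case True
    then have "cell n l \<in> null_sets G" by (auto simp: null_sets_def emeasure_eq_measure)
    then show ?thesis by (rule AE_not_in[THEN AE_mp]) (intro AE_I2; auto)
  next
    case False
    then show ?thesis using measure_nonneg[of G "cell n l"] by (intro AE_I2) (auto simp: less_le)
  qed
  then show ?thesis by (simp add: AE_all_countable)
qed

lemma sba_map_converges:
  assumes supp: "support G = {c..d}"
  shows "AE x in G. (\<lambda>n. sba_map n x) \<longlonglongrightarrow> x \<and> (\<forall>n\<ge>1. c \<le> sba_map n x \<and> sba_map n x \<le> d)"
proof -
  note cdT = support_interval(1)[OF supp] and conc = support_interval(2)[OF supp]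
    and supp_pos = support_interval(3)[OF supp]
  show ?thesis
    using conc AE_cells_pos_measure
  proof eventually_elim
    case (elim x)
    then have x: "c \<le> x" "x \<le> d" and xT: "x \<in> T" using cdT by auto
    have pos: "0 < measure G (cell n (cell_index x n))" for n
      using elim cell_index[OF xT, of n] mem_cell_index[OF xT, of n] by auto
    have Lx: "left_end x n \<le> ereal x" and Rx: "ereal x \<le> right_end x n" for n
      using cell_index[OF xT, of n] by auto
    have lo: "real_max c (left_end x n) \<le> sba_map n x" and hi: "sba_map n x \<le> real_min d (right_end x n)"
      if "1 \<le> n" for n
      using sba_map_within_clipped_ends[OF supp x that pos] by auto
    have shrink: "(\<lambda>n. real_min d (right_end x n) - real_max c (left_end x n)) \<longlonglongrightarrow> 0"
    proof (rule nested_cells_shrink[OF x conc supp_pos Lx Rx])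
      show "left_end x n \<le> left_end x (Suc n)" "right_end x (Suc n) \<le> right_end x n" for n
        using ends_nested[OF xT] by auto
      show "right_end x (Suc n) = bG G (left_end x n) (right_end x n) \<or>
            left_end x (Suc n) = bG G (left_end x n) (right_end x n)" if "1 \<le> n" for n
        using ends_Suc[OF xT, of n] cut_point_eq_bG[OF xT that] by auto
    qed
    have "\<forall>\<^sub>F n in sequentially.
        norm (sba_map n x - x) \<le> real_min d (right_end x n) - real_max c (left_end x n)"
      using eventually_ge_at_top[of 1]
    proof eventually_elim
      case (elim n)
      then show ?case
        using lo[OF elim] hi[OF elim] real_max_bounds(3)[OF Lx[of n] x(1)]
          real_min_bounds(3)[OF Rx[of n] x(2)]
        by (simp add: abs_le_iff)
    qed
    from Lim_null_comparison[OF this shrink] have "(\<lambda>n. sba_map n x - x) \<longlonglongrightarrow> 0" .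
    then have "(\<lambda>n. sba_map n x) \<longlonglongrightarrow> x" by (simp add: LIM_zero_iff)
    moreover have "c \<le> sba_map n x \<and> sba_map n x \<le> d" if "1 \<le> n" for n
      using lo[OF that] hi[OF that] real_max_bounds(1)[OF Lx[of n] x(1)] real_min_bounds(1)[OF Rx[of n] x(2)]
      by simp
    ultimately show ?case by blast
  qed
qed

lemma wasserstein_sba_approx_le:
  assumes p: "0 < p" and int: "integrable G (\<lambda>x. \<bar>sba_map n x - x\<bar> powr p)"
  shows "wasserstein p (sba_approx G T n) G \<le> (\<integral>x. \<bar>sba_map n x - x\<bar> powr p \<partial>G) powr (1/p)"
    and "wasserstein p G (sba_approx G T n) \<le> (\<integral>x. \<bar>sba_map n x - x\<bar> powr p \<partial>G) powr (1/p)"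
proof -
  let ?I = "\<integral>x. \<bar>sba_map n x - x\<bar> powr p \<partial>G"
  have nn: "(\<integral>\<^sup>+x. ennreal (\<bar>sba_map n x - x\<bar> powr p) \<partial>G) = ennreal ?I"
    by (rule nn_integral_eq_integral[OF int]) simp
  have nn': "(\<integral>\<^sup>+x. ennreal (\<bar>x - sba_map n x\<bar> powr p) \<partial>G) = ennreal ?I"
    using nn by (simp add: abs_minus_commute)
  have I: "enn2real (ennreal ?I) = ?I" by (rule enn2real_ennreal) (rule integral_nonneg_AE, simp)
  note meas = measurable_G_sba_map[of n] measurable_G_id
  have "wasserstein p (distr G borel (sba_map n)) (distr G borel (\<lambda>x. x)) \<le> ?I powr (1/p)"
    using wasserstein_distr_le[OF prob_space_axioms meas p] unfolding nn' I by simp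
  then show "wasserstein p (sba_approx G T n) G \<le> ?I powr (1/p)"
    unfolding sba_approx_eq_distr distr_id_G .
  have "wasserstein p (distr G borel (\<lambda>x. x)) (distr G borel (sba_map n)) \<le> ?I powr (1/p)"
    using wasserstein_distr_le[OF prob_space_axioms meas(2,1) p] unfolding nn I by simp
  then show "wasserstein p G (sba_approx G T n) \<le> ?I powr (1/p)"
    unfolding sba_approx_eq_distr distr_id_G .
qed

lemma sba_approx_in_Pp:
  assumes supp: "support G = {c..d}" and p: "0 < p" and n: "1 \<le> n"
  shows "sba_approx G T n \<in> Pp p T"
proof -
  note cdT = support_interval(1)[OF supp]
  have in_cd: "AE x in G. c \<le> sba_map n x \<and> sba_map n x \<le> d"
    using sba_map_converges[OF supp] by eventually_elim (use n in auto)
  have "sba_map n -` (- T) \<in> null_sets G"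
  proof -
    have "AE x in G. sba_map n x \<in> T" using in_cd by eventually_elim (use cdT in auto)
    moreover have "sba_map n -` (- T) \<in> sets G"
      using measurable_sets[OF sba_map_measurable sets.compl_sets[OF sets_T]]
      by (simp add: Compl_eq_Diff_UNIV)
    ultimately show ?thesis by (simp add: AE_iff_null_sets)
  qed
  then have "emeasure (distr G borel (sba_map n)) (- T) = 0"
    by (simp add: emeasure_distr null_sets_def)
  moreover have "integrable G (\<lambda>x. \<bar>sba_map n x\<bar> powr p)"
  proof (rule integrable_const_bound)
    show "AE x in G. norm (\<bar>sba_map n x\<bar> powr p) \<le> max \<bar>c\<bar> \<bar>d\<bar> powr p"
      using in_cd by eventually_elim (use p in \<open>auto intro!: powr_mono2\<close>)
  qed simp
  then have "integrable (distr G borel (sba_map n)) (\<lambda>x. \<bar>x\<bar> powr p)"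
    by (subst integrable_distr_eq) auto
  ultimately show ?thesis
    unfolding sba_approx_eq_distr Pp_def by (auto intro: prob_space_distr)
qed

lemma integral_sba_map_dist_tendsto:
  assumes supp: "support G = {c..d}" and p: "0 < p"
  shows "(\<lambda>n. \<integral>x. \<bar>sba_map (Suc n) x - x\<bar> powr p \<partial>G) \<longlonglongrightarrow> 0"
    and "integrable G (\<lambda>x. \<bar>sba_map (Suc n) x - x\<bar> powr p)"
proof -
  have lim: "AE x in G. (\<lambda>n. \<bar>sba_map (Suc n) x - x\<bar> powr p) \<longlonglongrightarrow> 0"
    using sba_map_converges[OF supp]
  proof eventually_elim
    case (elim x)
    then have "(\<lambda>n. sba_map n x) \<longlonglongrightarrow> x" by (rule conjunct1)
    then have "(\<lambda>n. sba_map (Suc n) x - x) \<longlonglongrightarrow> 0" by (intro LIM_zero LIMSEQ_Suc)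
    then show ?case by (intro tendsto_zero_powrI[OF tendsto_rabs_zero tendsto_const _ p]) auto
  qed
  have bound: "AE x in G. norm (\<bar>sba_map (Suc n) x - x\<bar> powr p) \<le> (d - c) powr p" for n
    using sba_map_converges[OF supp] support_interval(2)[OF supp]
  proof eventually_elim
    case (elim x)
    then have "c \<le> sba_map (Suc n) x" "sba_map (Suc n) x \<le> d" "c \<le> x" "x \<le> d" by auto
    then have "\<bar>sba_map (Suc n) x - x\<bar> \<le> d - c" by (simp add: abs_le_iff)
    then show ?case using p by (simp add: powr_mono2)
  qed
  have meas: "(\<lambda>x. \<bar>sba_map (Suc n) x - x\<bar> powr p) \<in> borel_measurable G" for n by measurable
  show "(\<lambda>n. \<integral>x. \<bar>sba_map (Suc n) x - x\<bar> powr p \<partial>G) \<longlonglongrightarrow> 0"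
    using integral_dominated_convergence[OF _ meas _ lim bound] by simp
  show "integrable G (\<lambda>x. \<bar>sba_map (Suc n) x - x\<bar> powr p)"
    by (rule integrable_dominated_convergence2[OF _ meas _ lim bound]) auto
qed

theorem sba_approx_wasserstein_tendsto:
  assumes supp: "support G = {c..d}" and p: "0 < p"
  shows "(\<lambda>n. wasserstein p (sba_approx G T n) G) \<longlonglongrightarrow> 0"
    and "(\<lambda>n. wasserstein p G (sba_approx G T n)) \<longlonglongrightarrow> 0"
proof -
  note I = integral_sba_map_dist_tendsto[OF supp p]
  have lim: "(\<lambda>n. (\<integral>x. \<bar>sba_map (Suc n) x - x\<bar> powr p \<partial>G) powr (1/p)) \<longlonglongrightarrow> 0"
    using p by (intro tendsto_zero_powrI[OF I(1) tendsto_const]) auto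
  note W = wasserstein_sba_approx_le[OF p I(2)]
  have "(\<lambda>n. wasserstein p (sba_approx G T (Suc n)) G) \<longlonglongrightarrow> 0"
    by (rule tendsto_sandwich[OF _ _ tendsto_const lim]) (use W wasserstein_nonneg in auto)
  then show "(\<lambda>n. wasserstein p (sba_approx G T n) G) \<longlonglongrightarrow> 0"
    by (rule filterlim_sequentially_Suc[THEN iffD1])
  have "(\<lambda>n. wasserstein p G (sba_approx G T (Suc n))) \<longlonglongrightarrow> 0"
    by (rule tendsto_sandwich[OF _ _ tendsto_const lim]) (use W wasserstein_nonneg in auto)
  then show "(\<lambda>n. wasserstein p G (sba_approx G T n)) \<longlonglongrightarrow> 0"
    by (rule filterlim_sequentially_Suc[THEN iffD1])
qed

lemma sba_approx_in_nhd:
  assumes supp: "support G = {c..d}" and p: "0 < p" and V: "W_nhd p T G V"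
  shows "\<exists>n\<ge>1. sba_approx G T n \<in> V"
proof -
  obtain e where "0 < e" and ball: "{G' \<in> Pp p T. wasserstein p G G' < e} \<subseteq> V"
    using V unfolding W_nhd_def by blast
  have "\<forall>\<^sub>F n in sequentially. 1 \<le> n \<and> wasserstein p G (sba_approx G T n) < e"
    using order_tendstoD(2)[OF sba_approx_wasserstein_tendsto(2)[OF supp p] \<open>0 < e\<close>]
    by (simp add: eventually_conj_iff eventually_ge_at_top)
  then obtain n where "1 \<le> n" "wasserstein p G (sba_approx G T n) < e"
    by (auto dest: eventually_happens)
  with sba_approx_in_Pp[OF supp p] ball show ?thesis by auto
qed

section \<open>Finitely supported measures\<close>

lemma bG_finite_support:
  assumes A: "finite A" "A \<noteq> {}" "A \<subseteq> ereal_Ioc a b"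
    and AE: "AE y in G. y \<in> ereal_Ioc a b \<longrightarrow> y \<in> A"
    and pos: "\<forall>s\<in>A. 0 < measure G {s}"
  shows "ereal (Min A) \<le> bG G a b" and "bG G a b \<le> ereal (Max A)"
    and "Min A < Max A \<Longrightarrow> bG G a b < ereal (Max A)"
proof -
  define C where "C = ereal_Ioc a b"
  let ?P = "measure G C" and ?I = "\<integral>y. indicator C y * y \<partial>G"
  have MinA: "Min A \<in> A" using A by simp
  then have MinC: "Min A \<in> C" using A unfolding C_def by blast
  then have "a \<le> b" unfolding C_def ereal_Ioc_def by auto
  have "measure G {Min A} \<le> ?P" using MinC by (intro finite_measure_mono) (auto simp: C_def)
  with pos MinA have P: "0 < ?P" by fastforce
  have bG: "bG G a b = ereal (?I / ?P)" using bG_eq[OF \<open>a \<le> b\<close>] P unfolding C_def by simp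
  have "Min A * ?P \<le> ?I"
    by (rule integral_indicator_ge) (use AE A in \<open>auto simp: C_def elim!: AE_mp\<close>)
  with P bG show "ereal (Min A) \<le> bG G a b" by (simp add: pos_le_divide_eq)
  have "?I \<le> Max A * ?P"
    by (rule integral_indicator_le) (use AE A in \<open>auto simp: C_def elim!: AE_mp\<close>)
  with P bG show "bG G a b \<le> ereal (Max A)" by (simp add: pos_divide_le_eq)
  assume less: "Min A < Max A"
  have int_atom: "integrable G (\<lambda>y. (Max A - Min A) * indicator {Min A} y)"
    using integrable_mult_indicator[of "{Min A}" G "\<lambda>_. Max A - Min A"] by (simp add: mult.commute)
  have int_C: "integrable G (\<lambda>y. indicator C y * Max A)"
    unfolding C_def by (rule integrable_indicator_times_const) simp
  have "?I \<le> (\<integral>y. indicator C y * Max A - (Max A - Min A) * indicator {Min A} y \<partial>G)"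
  proof (rule integral_mono_AE)
    show "AE y in G. indicator C y * y \<le> indicator C y * Max A - (Max A - Min A) * indicator {Min A} y"
      using AE
    proof eventually_elim
      case (elim y)
      then show ?case using A MinC by (cases "y \<in> C"; cases "y = Min A") (auto simp: C_def)
    qed
    show "integrable G (\<lambda>y. indicator C y * y)"
      unfolding C_def by (rule integrable_indicator_times_id) simp
    show "integrable G (\<lambda>y. indicator C y * Max A - (Max A - Min A) * indicator {Min A} y)"
      using int_C int_atom by (rule Bochner_Integration.integrable_diff)
  qed
  also have "\<dots> = Max A * ?P - (Max A - Min A) * measure G {Min A}"
    using Bochner_Integration.integral_diff[OF int_C int_atom] by (simp add: C_def)
  also have "\<dots> < Max A * ?P" using less pos MinA by simp
  finally show "bG G a b < ereal (Max A)" using P bG by (simp add: pos_divide_less_eq)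
qed

abbreviation "cell_Ioc x k \<equiv> ereal_Ioc (left_end x k) (right_end x k)"

lemma mem_cell_Ioc: "x \<in> T \<Longrightarrow> infT < ereal x \<Longrightarrow> x \<in> cell_Ioc x k"
  using cell_index[of x k] unfolding ereal_Ioc_def by auto

lemma cell_Ioc_Suc_subset: "x \<in> T \<Longrightarrow> cell_Ioc x (Suc k) \<subseteq> cell_Ioc x k"
  using ends_nested[of x k] unfolding ereal_Ioc_def by (auto intro: order_trans le_less_trans)

context
  fixes S :: "real set"
  assumes finite_S: "finite S" and AE_S: "AE y in G. y \<in> S"
    and atoms: "\<forall>s\<in>S. 0 < measure G {s} \<and> s \<in> T \<and> infT < ereal s"
begin

lemma card_atoms_cell_Ioc_decreasing:
  assumes s: "s \<in> S" and n: "1 \<le> n" and two: "2 \<le> card (S \<inter> cell_Ioc s n)"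
  shows "card (S \<inter> cell_Ioc s (Suc n)) < card (S \<inter> cell_Ioc s n)"
proof -
  define A where "A = S \<inter> cell_Ioc s n"
  have sT: "s \<in> T" using atoms s by auto
  have A: "finite A" "A \<noteq> {}" "A \<subseteq> cell_Ioc s n" using finite_S two unfolding A_def by auto
  have "Min A \<noteq> Max A"
  proof
    assume "Min A = Max A"
    then have "A \<subseteq> {Min A}" using A by (metis Max_ge Min_le antisym subsetI singletonI)
    then have "card A \<le> 1" using card_mono[of "{Min A}" A] by simp
    with two show False unfolding A_def by simp
  qed
  then have less: "Min A < Max A" using A by (simp add: less_le)
  have AE_A: "AE y in G. y \<in> cell_Ioc s n \<longrightarrow> y \<in> A"
    using AE_S by eventually_elim (simp add: A_def)
  have pos: "\<forall>a\<in>A. 0 < measure G {a}" using atoms unfolding A_def by auto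
  have cut: "cut_point s n = bG G (left_end s n) (right_end s n)" by (rule cut_point_eq_bG[OF sT n])
  note m = bG_finite_support[OF A AE_A pos, folded cut]
  txt \<open>The cut point lies in \<open>[Min A, Max A)\<close>, so the next cell loses \<open>Max A\<close> or \<open>Min A\<close>.\<close>
  have "S \<inter> cell_Ioc s (Suc n) \<subseteq> A - {Max A} \<or> S \<inter> cell_Ioc s (Suc n) \<subseteq> A - {Min A}"
  proof (cases "ereal s \<le> cut_point s n")
    case True
    then have "right_end s (Suc n) = cut_point s n" using ends_Suc[OF sT, of n] by simp
    then have "Max A \<notin> cell_Ioc s (Suc n)" using m(3)[OF less] by (auto simp: ereal_Ioc_def)
    then show ?thesis using cell_Ioc_Suc_subset[OF sT, of n] unfolding A_def by auto
  next
    case False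
    then have "left_end s (Suc n) = cut_point s n" using ends_Suc[OF sT, of n] by simp
    then have "Min A \<notin> cell_Ioc s (Suc n)" using m(1) by (auto simp: ereal_Ioc_def)
    then show ?thesis using cell_Ioc_Suc_subset[OF sT, of n] unfolding A_def by auto
  qed
  moreover have "card (A - {Max A}) < card A" "card (A - {Min A}) < card A"
    using A by (simp_all add: card_Diff1_less card_gt_0_iff)
  ultimately show ?thesis
    using A(1) card_mono[of "A - {Max A}" "S \<inter> cell_Ioc s (Suc n)"]
      card_mono[of "A - {Min A}" "S \<inter> cell_Ioc s (Suc n)"] unfolding A_def
    by (meson finite_Diff le_less_trans)
qed

lemma atoms_cell_Ioc_singleton:
  assumes s: "s \<in> S"
  shows "S \<inter> cell_Ioc s (Suc (card S)) = {s}"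
proof -
  have sT: "s \<in> T" and s_in: "s \<in> S \<inter> cell_Ioc s k" for k using atoms s mem_cell_Ioc by auto
  have "card (S \<inter> cell_Ioc s (Suc j)) \<le> max 1 (card S - j)" for j
  proof (induction j)
    case 0
    have "card (S \<inter> cell_Ioc s (Suc 0)) \<le> card S" using finite_S by (intro card_mono) auto
    then show ?case by (metis diff_zero le_max_iff_disj)
  next
    case (Suc j)
    show ?case
    proof (cases "2 \<le> card (S \<inter> cell_Ioc s (Suc j))")
      case True
      with Suc.IH have "card (S \<inter> cell_Ioc s (Suc j)) \<le> card S - j" by linarith
      moreover have "card (S \<inter> cell_Ioc s (Suc (Suc j))) < card (S \<inter> cell_Ioc s (Suc j))"
        by (rule card_atoms_cell_Ioc_decreasing[OF s _ True]) simp
      ultimately show ?thesis by linarith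
    next
      case False
      moreover have "S \<inter> cell_Ioc s (Suc (Suc j)) \<subseteq> S \<inter> cell_Ioc s (Suc j)"
        using cell_Ioc_Suc_subset[OF sT] by blast
      then have "card (S \<inter> cell_Ioc s (Suc (Suc j))) \<le> card (S \<inter> cell_Ioc s (Suc j))"
        using finite_S by (intro card_mono) simp_all
      ultimately show ?thesis by linarith
    qed
  qed
  from this[of "card S"] have "card (S \<inter> cell_Ioc s (Suc (card S))) \<le> 1" by simp
  then have "\<forall>a\<in>S \<inter> cell_Ioc s (Suc (card S)). \<forall>b\<in>S \<inter> cell_Ioc s (Suc (card S)). a = b"
    using card_le_Suc0_iff_eq[of "S \<inter> cell_Ioc s (Suc (card S))"] finite_S by auto
  with s_in show ?thesis by blast
qed

lemma sba_map_fixes_atoms: "s \<in> S \<Longrightarrow> sba_map (Suc (card S)) s = s"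
proof -
  assume s: "s \<in> S"
  then have sT: "s \<in> T" using atoms by auto
  let ?n = "Suc (card S)"
  have AE_s: "AE y in G. y \<in> cell_Ioc s ?n \<longrightarrow> y \<in> {s}"
    using AE_S by eventually_elim (use atoms_cell_Ioc_singleton[OF s] in blast)
  have "{s} \<subseteq> cell_Ioc s ?n" using atoms_cell_Ioc_singleton[OF s] by auto
  from bG_finite_support[OF _ _ this AE_s] atoms s
  have "bG G (left_end s ?n) (right_end s ?n) = ereal s" by (auto intro: antisym)
  then show ?thesis using sba_map_eq_cut_point[OF sT, of ?n] cut_point_eq_bG[OF sT, of ?n] by simp
qed

end

lemma sba_approx_eq_self:
  assumes S: "finite S" "AE x in G. x \<in> S" and above: "\<forall>s\<in>S. infT < ereal s"
  shows "\<exists>n\<ge>1. sba_approx G T n = G"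
proof -
  define S' where "S' = {s\<in>S. 0 < measure G {s}}"
  have "AE x in G. x \<notin> {s\<in>S. measure G {s} = 0}"
  proof (rule AE_not_in)
    have "(\<Union>s\<in>{s\<in>S. measure G {s} = 0}. {s}) \<in> null_sets G"
      using S(1) by (intro null_sets.finite_UN) (auto simp: null_sets_def emeasure_eq_measure)
    then show "{s\<in>S. measure G {s} = 0} \<in> null_sets G" by simp
  qed
  with S(2) have AE_S': "AE x in G. x \<in> S'"
  proof eventually_elim
    case (elim x)
    have "0 \<le> measure G {x}" by simp
    with elim show ?case unfolding S'_def by (auto simp: less_le)
  qed
  have "s \<in> T" if "s \<in> S'" for s
  proof (rule ccontr)
    assume "s \<notin> T"
    then have "emeasure G {s} \<le> emeasure G (- T)" by (intro emeasure_mono) auto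
    then have "measure G {s} \<le> 0" using null_outside_T by (simp add: emeasure_eq_measure)
    with that show False unfolding S'_def by simp
  qed
  then have atoms: "\<forall>s\<in>S'. 0 < measure G {s} \<and> s \<in> T \<and> infT < ereal s"
    using above unfolding S'_def by auto
  have fin: "finite S'" using S(1) unfolding S'_def by simp
  have "AE x in G. sba_map (Suc (card S')) x = x"
    using AE_S' by eventually_elim (simp add: sba_map_fixes_atoms[OF fin AE_S' atoms])
  from distr_cong_AE[OF refl refl this measurable_G_sba_map measurable_G_id]
  have "distr G borel (sba_map (Suc (card S'))) = distr G borel (\<lambda>x. x)" .
  then have "sba_approx G T (Suc (card S')) = G" by (simp only: sba_approx_eq_distr distr_id_G)
  then show ?thesis by (intro exI[of _ "Suc (card S')"]) simp
qed

section \<open>Approximation by finitely supported measures\<close>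

definition inner_point :: real where
  "inner_point = (SOME z. z \<in> T \<and> infT < ereal z)"

lemma inner_point: "inner_point \<in> T" "infT < ereal inner_point"
proof -
  obtain z where z: "infT < ereal z" "ereal z < supT" using ereal_dense2[OF infT_less_supT] by blast
  then have "z \<in> T" by (intro mem_T_iff[THEN iffD2] conjI less_imp_le)
  with z have "\<exists>z. z \<in> T \<and> infT < ereal z" by blast
  from someI_ex[OF this] show "inner_point \<in> T" "infT < ereal inner_point"
    unfolding inner_point_def by auto
qed

lemma closest_point_T: "closest_point T y \<in> T"
  using closest_point_in_set[OF admissible_Theta_closed[OF admissible]] inner_point(1) by blast

text \<open>Rounding to a grid and projecting onto \<open>T\<close> is not enough: \<open>b\<^sub>G\<close> ignores the left
  endpoint of a cell, so an atom at \<open>inf T\<close> is never reproduced by the SBA. Mixing in a small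
  multiple of \<open>inner_point\<close> keeps all atoms strictly above \<open>inf T\<close>.\<close>

definition quantize :: "nat \<Rightarrow> real \<Rightarrow> real" where
  "quantize k x = (1 - 1 / Suc k) * closest_point T (grid_round (Suc k) x) + inner_point / Suc k"

lemma quantize_in_T: "quantize k x \<in> T"
proof -
  have "(1 - 1 / Suc k) *\<^sub>R closest_point T (grid_round (Suc k) x) + (1 / Suc k) *\<^sub>R inner_point \<in> T"
    by (rule convexD[OF admissible_Theta_convex[OF admissible] closest_point_T inner_point(1)]) auto
  then show ?thesis unfolding quantize_def by simp
qed

lemma quantize_above_infT: "infT < ereal (quantize k x)"
proof (cases infT)
  case (real a)
  let ?K = "real (Suc k)"
  have "a \<le> closest_point T (grid_round ?K x)" using infT_le[OF closest_point_T] real by simp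
  moreover have "a < inner_point" using inner_point(2) real by simp
  ultimately have "(1 - 1 / ?K) * a \<le> (1 - 1 / ?K) * closest_point T (grid_round ?K x)"
    "a / ?K < inner_point / ?K" by (auto intro: mult_left_mono divide_strict_right_mono)
  moreover have "a = (1 - 1 / ?K) * a + a / ?K" by (simp add: left_diff_distrib)
  ultimately have "a < quantize k x" unfolding quantize_def by linarith
  then show ?thesis using real by simp
next
  case PInf
  then show ?thesis using infT_less_supT by simp
qed simp

lemma finite_range_quantize: "finite (range (quantize k))"
proof -
  have "range (quantize k) \<subseteq> (\<lambda>y. (1 - 1 / Suc k) * closest_point T y + inner_point / Suc k)
      ` range (grid_round (Suc k))"
    unfolding quantize_def by auto
  then show ?thesis by (rule finite_subset) (intro finite_imageI finite_range_grid_round; simp)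
qed

lemma quantize_measurable [measurable]: "quantize k \<in> borel_measurable borel"
proof -
  have "continuous_on UNIV (closest_point T)"
    using continuous_on_closest_point[OF admissible_Theta_convex[OF admissible]
        admissible_Theta_closed[OF admissible]] inner_point(1) by blast
  then have "closest_point T \<in> borel_measurable borel" by (rule borel_measurable_continuous_onI)
  then show ?thesis unfolding quantize_def by measurable
qed

lemma quantize_dist:
  assumes "x \<in> T"
  shows "\<bar>quantize k x - x\<bar> \<le> \<bar>grid_round (Suc k) x - x\<bar> + (\<bar>inner_point\<bar> + \<bar>x\<bar>) / Suc k"
proof -
  let ?K = "real (Suc k)" and ?r = "closest_point T (grid_round (Suc k) x)"
  have r: "\<bar>?r - x\<bar> \<le> \<bar>grid_round ?K x - x\<bar>"
    using closest_point_lipschitz[OF admissible_Theta_convex[OF admissible]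
        admissible_Theta_closed[OF admissible], of "grid_round ?K x" x]
      closest_point_self[OF assms] inner_point(1)
    by (auto simp: dist_real_def)
  have "(1 - 1 / K) * r + z / K - x = (1 - 1 / K) * (r - x) + (z - x) / K" if "K \<noteq> 0" for K r z :: real
    using that by (simp add: field_simps)
  then have "quantize k x - x = (1 - 1 / ?K) * (?r - x) + (inner_point - x) / ?K"
    unfolding quantize_def by simp
  then have "\<bar>quantize k x - x\<bar> \<le> \<bar>(1 - 1 / ?K) * (?r - x)\<bar> + \<bar>(inner_point - x) / ?K\<bar>"
    by (metis abs_triangle_ineq)
  also have "\<bar>(1 - 1 / ?K) * (?r - x)\<bar> \<le> \<bar>?r - x\<bar>"
    by (simp add: abs_mult mult_left_le_one_le)
  also have "\<bar>(inner_point - x) / ?K\<bar> \<le> (\<bar>inner_point\<bar> + \<bar>x\<bar>) / ?K"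
    by (simp add: abs_div divide_right_mono)
  finally show ?thesis using r by simp
qed

lemma quantize_tendsto: assumes "x \<in> T" shows "(\<lambda>k. quantize k x) \<longlonglongrightarrow> x"
proof -
  define C where "C = 1 + \<bar>inner_point\<bar> + \<bar>x\<bar>"
  have "\<forall>\<^sub>F k in sequentially. norm (quantize k x - x) \<le> C / Suc k"
  proof (rule eventually_sequentiallyI[of "nat \<lceil>\<bar>x\<bar>\<rceil>"])
    fix k assume k: "nat \<lceil>\<bar>x\<bar>\<rceil> \<le> k"
    then have "clip (Suc k) x = x" by (intro clip_eq) linarith
    then have "\<bar>grid_round (Suc k) x - x\<bar> \<le> 1 / Suc k" using grid_round_clip_dist[of "Suc k" x] by simp
    with quantize_dist[OF assms, of k] show "norm (quantize k x - x) \<le> C / Suc k"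
      unfolding C_def by (simp add: add_divide_distrib)
  qed
  moreover have "(\<lambda>k. C / Suc k) \<longlonglongrightarrow> 0" using LIMSEQ_Suc[OF lim_const_over_n[of C]] by simp
  ultimately have "(\<lambda>k. quantize k x - x) \<longlonglongrightarrow> 0" by (rule Lim_null_comparison)
  then show ?thesis by (simp add: LIM_zero_iff)
qed

lemma quantize_dist_le: "x \<in> T \<Longrightarrow> \<bar>quantize k x - x\<bar> \<le> 2 * \<bar>x\<bar> + (1 + \<bar>inner_point\<bar>)"
  using quantize_dist[of x k] grid_round_dist[of "Suc k" x]
    divide_left_mono[of 1 "real (Suc k)" "\<bar>inner_point\<bar> + \<bar>x\<bar>"] by simp

lemma integral_quantize_dist_tendsto:
  assumes p: "0 < p" and moment: "integrable G (\<lambda>x. \<bar>x\<bar> powr p)"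
  shows "(\<lambda>k. \<integral>x. \<bar>quantize k x - x\<bar> powr p \<partial>G) \<longlonglongrightarrow> 0"
    and "integrable G (\<lambda>x. \<bar>quantize k x - x\<bar> powr p)"
proof -
  define C where "C = 1 + \<bar>inner_point\<bar>"
  define w where "w x = 2 powr p * (2 powr p * \<bar>x\<bar> powr p + C powr p)" for x
  have w: "integrable G w" unfolding w_def using moment by simp
  have meas: "(\<lambda>x. \<bar>quantize k x - x\<bar> powr p) \<in> borel_measurable G" for k
    by (subst measurable_cong_sets[OF sets_G refl]) measurable
  have lim: "AE x in G. (\<lambda>k. \<bar>quantize k x - x\<bar> powr p) \<longlonglongrightarrow> 0"
    using AE_in_T
  proof eventually_elim
    case (elim x)
    have "(\<lambda>k. quantize k x - x) \<longlonglongrightarrow> 0" using quantize_tendsto[OF elim] by (rule LIM_zero)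
    then show ?case by (intro tendsto_zero_powrI[OF tendsto_rabs_zero tendsto_const _ p]) auto
  qed
  have bound: "AE x in G. norm (\<bar>quantize k x - x\<bar> powr p) \<le> w x" for k
    using AE_in_T
  proof eventually_elim
    case (elim x)
    have "\<bar>quantize k x - x\<bar> powr p \<le> (2 * \<bar>x\<bar> + C) powr p"
      using quantize_dist_le[OF elim, of k] p unfolding C_def by (intro powr_mono2) auto
    also have "\<dots> \<le> 2 powr p * ((2 * \<bar>x\<bar>) powr p + C powr p)"
      using p unfolding C_def by (intro powr_add_le) auto
    finally show ?case unfolding w_def by (simp add: powr_mult)
  qed
  show "(\<lambda>k. \<integral>x. \<bar>quantize k x - x\<bar> powr p \<partial>G) \<longlonglongrightarrow> 0"
    using integral_dominated_convergence[OF _ meas w lim bound] by simp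
  show "integrable G (\<lambda>x. \<bar>quantize k x - x\<bar> powr p)"
    using integrable_dominated_convergence2[OF _ meas w lim bound] by simp
qed

lemma distr_quantize_in_Pp:
  assumes p: "0 < p"
  shows "distr G borel (quantize k) \<in> Pp p T"
proof -
  have qG: "quantize k \<in> G \<rightarrow>\<^sub>M borel" by (subst measurable_cong_sets[OF sets_G refl]) simp
  obtain B where B: "\<And>x. \<bar>quantize k x\<bar> \<le> B"
    using finite_imp_bounded[OF finite_range_quantize[of k]] by (auto simp: bounded_iff)
  have "integrable G (\<lambda>x. \<bar>quantize k x\<bar> powr p)"
  proof (rule integrable_const_bound[where B="B powr p"])
    show "AE x in G. norm (\<bar>quantize k x\<bar> powr p) \<le> B powr p"
      using B p by (intro AE_I2) (simp add: powr_mono2)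
    show "(\<lambda>x. \<bar>quantize k x\<bar> powr p) \<in> borel_measurable G" using qG by measurable
  qed
  then have "integrable (distr G borel (quantize k)) (\<lambda>x. \<bar>x\<bar> powr p)"
    by (subst integrable_distr_eq[OF qG]) auto
  moreover have "quantize k -` (- T) = {}" using quantize_in_T by auto
  then have "emeasure (distr G borel (quantize k)) (- T) = 0"
    by (subst emeasure_distr[OF qG]) auto
  ultimately show ?thesis unfolding Pp_def by (auto intro: prob_space_distr[OF qG])
qed

lemma wasserstein_distr_quantize_tendsto:
  assumes p: "0 < p" and moment: "integrable G (\<lambda>x. \<bar>x\<bar> powr p)"
  shows "(\<lambda>k. wasserstein p G (distr G borel (quantize k))) \<longlonglongrightarrow> 0"
proof -
  note I = integral_quantize_dist_tendsto[OF p moment]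
  have qG: "quantize k \<in> G \<rightarrow>\<^sub>M borel" for k by (subst measurable_cong_sets[OF sets_G refl]) simp
  have W: "wasserstein p G (distr G borel (quantize k)) \<le> (\<integral>x. \<bar>quantize k x - x\<bar> powr p \<partial>G) powr (1/p)"
    for k
  proof -
    have "(\<integral>\<^sup>+x. ennreal (\<bar>quantize k x - x\<bar> powr p) \<partial>G) = ennreal (\<integral>x. \<bar>quantize k x - x\<bar> powr p \<partial>G)"
      by (rule nn_integral_eq_integral[OF I(2)]) simp
    moreover have "enn2real (ennreal (\<integral>x. \<bar>quantize k x - x\<bar> powr p \<partial>G)) = (\<integral>x. \<bar>quantize k x - x\<bar> powr p \<partial>G)"
      by (rule enn2real_ennreal) (rule integral_nonneg_AE, simp)
    ultimately have "wasserstein p (distr G borel (\<lambda>x. x)) (distr G borel (quantize k))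
        \<le> (\<integral>x. \<bar>quantize k x - x\<bar> powr p \<partial>G) powr (1/p)"
      using wasserstein_distr_le[OF prob_space_axioms measurable_G_id qG[of k] p] by simp
    then show ?thesis unfolding distr_id_G .
  qed
  have lim: "(\<lambda>k. (\<integral>x. \<bar>quantize k x - x\<bar> powr p \<partial>G) powr (1/p)) \<longlonglongrightarrow> 0"
    using p by (intro tendsto_zero_powrI[OF I(1) tendsto_const]) auto
  show ?thesis by (rule tendsto_sandwich[OF _ _ tendsto_const lim]) (use W wasserstein_nonneg in auto)
qed

lemma finitely_supported_approximation:
  assumes p: "0 < p" and moment: "integrable G (\<lambda>x. \<bar>x\<bar> powr p)" and e: "0 < e"
  obtains G' S where "G' \<in> Pp p T" "wasserstein p G G' < e"
    and "finite S" "AE x in G'. x \<in> S" "\<forall>s\<in>S. infT < ereal s"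
proof -
  from order_tendstoD(2)[OF wasserstein_distr_quantize_tendsto[OF p moment] e]
  obtain k where k: "wasserstein p G (distr G borel (quantize k)) < e"
    by (auto dest: eventually_happens)
  have qG: "quantize k \<in> G \<rightarrow>\<^sub>M borel" by (subst measurable_cong_sets[OF sets_G refl]) simp
  have "AE x in distr G borel (quantize k). x \<in> range (quantize k)"
    using finite_range_quantize[of k]
    by (subst AE_distr_iff[OF qG]) (auto simp: finite_imp_closed borel_closed)
  with that distr_quantize_in_Pp[OF p] k finite_range_quantize quantize_above_infT show ?thesis
    by blast
qed

end

lemma Pp_imp_sba_measure:
  assumes "admissible_Theta T" "1 \<le> p" "G \<in> Pp p T"
  shows "sba_measure G T"
proof -
  have sets: "sets G = sets borel" and prob: "prob_space G" and null: "emeasure G (-T) = 0"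
    and moment: "integrable G (\<lambda>x. \<bar>x\<bar> powr p)" using assms(3) unfolding Pp_def by auto
  have "\<bar>x\<bar> \<le> 1 + \<bar>x\<bar> powr p" for x :: real
  proof (cases "\<bar>x\<bar> \<le> 1")
    case False
    then have "\<bar>x\<bar> powr 1 \<le> \<bar>x\<bar> powr p" using assms(2) by (intro powr_mono) auto
    with False show ?thesis by simp
  qed (simp add: add_increasing2)
  note bound = this
  interpret prob_space G by (rule prob)
  have "integrable G (\<lambda>x. x)"
  proof (rule Bochner_Integration.integrable_bound[of _ "\<lambda>x. 1 + \<bar>x\<bar> powr p"])
    show "integrable G (\<lambda>x. 1 + \<bar>x\<bar> powr p)" using moment by simp
    show "(\<lambda>x. x) \<in> borel_measurable G" by (subst measurable_cong_sets[OF sets refl]) simp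
    show "AE x in G. norm x \<le> norm (1 + \<bar>x\<bar> powr p)"
      using bound by (intro AE_I2) (simp add: add_increasing2)
  qed
  then show ?thesis using assms(1) sets prob null by (intro sba_measure.intro sba_measure_axioms.intro)
qed

lemma exists_sba_approx_in_nhd:
  assumes T: "admissible_Theta T" and p: "1 \<le> p" and G0: "G0 \<in> Pp p T" and V: "W_nhd p T G0 V"
  shows "\<exists>G\<in>V. \<exists>n\<ge>1. sba_approx G T n \<in> V"
proof -
  interpret sba_measure G0 T by (rule Pp_imp_sba_measure[OF T p G0])
  obtain e where "0 < e" and ball: "{G \<in> Pp p T. wasserstein p G0 G < e} \<subseteq> V"
    using V unfolding W_nhd_def by blast
  have moment: "integrable G0 (\<lambda>x. \<bar>x\<bar> powr p)" using G0 unfolding Pp_def by auto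
  obtain G S where G: "G \<in> Pp p T" "wasserstein p G0 G < e"
    and S: "finite S" "AE x in G. x \<in> S" "\<forall>s\<in>S. infT < ereal s"
    using finitely_supported_approximation[OF _ moment \<open>0 < e\<close>] p by auto
  interpret G: sba_measure G T by (rule Pp_imp_sba_measure[OF T p G(1)])
  obtain n where n: "1 \<le> n" "sba_approx G T n = G" using G.sba_approx_eq_self[OF S] by blast
  have "G \<in> V" using G ball by blast
  with n show ?thesis by (intro bexI[of _ G]) auto
qed

theorem theorem3:
  fixes p :: real and T :: "real set" and G0 :: "real measure"
  assumes "admissible_Theta T" and "1 \<le> p" and "G0 \<in> Pp p T"
  shows "(\<forall>V. W_nhd p T G0 V \<longrightarrow> (\<exists>G\<in>V. \<exists>n\<ge>1. sba_approx G T n \<in> V))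
       \<and> (G0 \<in> Pstar T \<longrightarrow>
            (\<forall>V. W_nhd p T G0 V \<longrightarrow> (\<exists>n\<ge>1. sba_approx G0 T n \<in> V))
          \<and> (\<lambda>n. wasserstein p (sba_approx G0 T n) G0) \<longlonglongrightarrow> 0)"
proof -
  interpret sba_measure G0 T by (rule Pp_imp_sba_measure[OF assms])
  have p: "0 < p" using assms(2) by simp
  have "(\<forall>V. W_nhd p T G0 V \<longrightarrow> (\<exists>n\<ge>1. sba_approx G0 T n \<in> V))
      \<and> (\<lambda>n. wasserstein p (sba_approx G0 T n) G0) \<longlonglongrightarrow> 0" if "G0 \<in> Pstar T"
  proof -
    obtain c d where supp: "support G0 = {c..d}" using \<open>G0 \<in> Pstar T\<close> unfolding Pstar_def by blast
    show ?thesis using sba_approx_in_nhd[OF supp p] sba_approx_wasserstein_tendsto(1)[OF supp p] by blast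
  qed
  then show ?thesis using exists_sba_approx_in_nhd[OF assms] by blast
qed

end
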